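(* Let $G$ be an SE-graph with $m$ sources and $n$ sinks and let $p_{ij}$ denote the $(i,j)$ entry of its path matrix $\mathrm{Path}_G$. Then for all $1\le i<\ell\le m$ and $1\le j<k\le n$: $$p_{ij}p_{ik}=q\,p_{ik}p_{ij},\quad p_{ij}p_{\ell j}=q\,p_{\ell j}p_{ij},\quad p_{ik}p_{\ell j}=p_{\ell j}p_{ik},\quad p_{ij}p_{\ell k}-p_{\ell k}p_{ij}=(q-q^{-1})\,p_{ik}p_{\ell j}.$$
   Context: Fix a field $\mathbb K$ and $q\in\mathbb K^\ast$. An SE-graph is a finite directed graph $G=(V,E)$ embedded in the plane (planar with a fixed layout) such that: every edge is either a horizontal edge (H-edge) directed to the right or a vertical edge (V-edge) directed downward; there are distinguished vertices $r_1,\dots,r_m$ (sources) lying on a vertical line in this order upward, and $c_1,\dots,c_n$ (sinks) lying on a horizontal line in this order from left to right; sources are incident only with H-edges and sinks only with V-edges; every vertex lies on a directed path from a source to a sink. Let $W$ be the set of inner vertices. $\mathcal L_G$ is the $\mathbb K$-algebra of Laurent polynomials in the elements of $W$ with relations, for distinct $u,v\in W$: $uv=qvu$ if $G$ has a directed horizontal path from $u$ to $v$; $vu=quv$ if $G$ has a directed vertical path from $u$ to $v$; $uv=vu$ otherwise. Edge weights: $w(e)=v$ if $e=(u,v)$ with $u$ a source; $w(e)=u^{-1}v$ if $e=(u,v)$ is an H-edge with $u,v\in W$; $w(e)=1$ for V-edges. The weight of a directed path is the ordered product of its edge weights. The path matrix $\mathrm{Path}_G$ is the $m\times n$ matrix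 over $\mathcal L_G$ whose $(i,j)$ entry is the sum of weights of all directed paths from $r_i$ to $c_j$ (zero if there are none). *)

theory Defs
  imports "HOL-Analysis.Analysis"
begin

definition H_edge :: "('v \<Rightarrow> real \<times> real) \<Rightarrow> 'v \<Rightarrow> 'v \<Rightarrow> bool" where
  "H_edge pos u v \<longleftrightarrow> snd (pos u) = snd (pos v) \<and> fst (pos u) < fst (pos v)"

definition V_edge :: "('v \<Rightarrow> real \<times> real) \<Rightarrow> 'v \<Rightarrow> 'v \<Rightarrow> bool" where
  "V_edge pos u v \<longleftrightarrow> fst (pos u) = fst (pos v) \<and> snd (pos v) < snd (pos u)"

definition edge_seg :: "('v \<Rightarrow> real \<times> real) \<Rightarrow> 'v \<times> 'v \<Rightarrow> (real \<times> real) set" where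
  "edge_seg pos e = closed_segment (pos (fst e)) (pos (snd e))"

definition is_path :: "('v \<times> 'v) set \<Rightarrow> 'v list \<Rightarrow> bool" where
  "is_path E xs \<longleftrightarrow> xs \<noteq> [] \<and> successively (\<lambda>u v. (u, v) \<in> E) xs"

definition sources :: "nat \<Rightarrow> (nat \<Rightarrow> 'v) \<Rightarrow> 'v set" where
  "sources m r = r ` {1..m}"

definition sinks :: "nat \<Rightarrow> (nat \<Rightarrow> 'v) \<Rightarrow> 'v set" where
  "sinks n c = c ` {1..n}"

definition inner_vertices :: "'v set \<Rightarrow> nat \<Rightarrow> (nat \<Rightarrow> 'v) \<Rightarrow> nat \<Rightarrow> (nat \<Rightarrow> 'v) \<Rightarrow> 'v set" where
  "inner_vertices V m r n c = V - sources m r - sinks n c"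

definition SE_graph ::
  "'v set \<Rightarrow> ('v \<times> 'v) set \<Rightarrow> ('v \<Rightarrow> real \<times> real) \<Rightarrow> nat \<Rightarrow> (nat \<Rightarrow> 'v) \<Rightarrow> nat \<Rightarrow> (nat \<Rightarrow> 'v) \<Rightarrow> bool"
where
  "SE_graph V E pos m r n c \<longleftrightarrow>
     finite V \<and> E \<subseteq> V \<times> V \<and>
     \<comment> \<open>planar straight-line embedding\<close>
     inj_on pos V \<and>
     (\<forall>e\<in>E. \<forall>e'\<in>E. e \<noteq> e' \<longrightarrow>
        edge_seg pos e \<inter> edge_seg pos e' \<subseteq> pos ` ({fst e, snd e} \<inter> {fst e', snd e'})) \<and>
     (\<forall>w\<in>V. \<forall>e\<in>E. w \<notin> {fst e, snd e} \<longrightarrow> pos w \<notin> edge_seg pos e) \<and>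
     \<comment> \<open>every edge is an H-edge or a V-edge\<close>
     (\<forall>(u, v)\<in>E. H_edge pos u v \<or> V_edge pos u v) \<and>
     \<comment> \<open>sources on a vertical line, in order upward\<close>
     sources m r \<subseteq> V \<and>
     (\<forall>i\<in>{1..m}. \<forall>i'\<in>{1..m}. fst (pos (r i)) = fst (pos (r i'))) \<and>
     (\<forall>i\<in>{1..m}. \<forall>i'\<in>{1..m}. i < i' \<longrightarrow> snd (pos (r i)) < snd (pos (r i'))) \<and>
     \<comment> \<open>sinks on a horizontal line, in order from left to right\<close>
     sinks n c \<subseteq> V \<and>
     (\<forall>j\<in>{1..n}. \<forall>j'\<in>{1..n}. snd (pos (c j)) = snd (pos (c j'))) \<and>
     (\<forall>j\<in>{1..n}. \<forall>j'\<in>{1..n}. j < j' \<longrightarrow> fst (pos (c j)) < fst (pos (c j'))) \<and>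
     \<comment> \<open>sources and sinks are distinct distinguished vertices\<close>
     sources m r \<inter> sinks n c = {} \<and>
     \<comment> \<open>sources are incident only with H-edges, sinks only with V-edges\<close>
     (\<forall>(u, v)\<in>E. u \<in> sources m r \<or> v \<in> sources m r \<longrightarrow> H_edge pos u v) \<and>
     (\<forall>(u, v)\<in>E. u \<in> sinks n c \<or> v \<in> sinks n c \<longrightarrow> V_edge pos u v) \<and>
     \<comment> \<open>no edge enters a source, no edge leaves a sink\<close>
     (\<forall>(u, v)\<in>E. v \<notin> sources m r \<and> u \<notin> sinks n c) \<and>
     \<comment> \<open>every vertex lies on a directed path from a source to a sink\<close>
     (\<forall>w\<in>V. \<exists>xs. is_path E xs \<and> hd xs \<in> sources m r \<and> last xs \<in> sinks n c \<and> w \<in> set xs)"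

definition hpath :: "('v \<times> 'v) set \<Rightarrow> ('v \<Rightarrow> real \<times> real) \<Rightarrow> 'v \<Rightarrow> 'v \<Rightarrow> bool" where
  "hpath E pos u v \<longleftrightarrow> (u, v) \<in> {(a, b). (a, b) \<in> E \<and> H_edge pos a b}\<^sup>+"

definition vpath :: "('v \<times> 'v) set \<Rightarrow> ('v \<Rightarrow> real \<times> real) \<Rightarrow> 'v \<Rightarrow> 'v \<Rightarrow> bool" where
  "vpath E pos u v \<longleftrightarrow> (u, v) \<in> {(a, b). (a, b) \<in> E \<and> V_edge pos a b}\<^sup>+"

definition K_algebra_map :: "('k::field \<Rightarrow> 'a::ring_1) \<Rightarrow> bool" where
  "K_algebra_map \<phi> \<longleftrightarrow> \<phi> 1 = 1 \<and> (\<forall>a b. \<phi> (a + b) = \<phi> a + \<phi> b) \<and>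
     (\<forall>a b. \<phi> (a * b) = \<phi> a * \<phi> b) \<and> (\<forall>a y. \<phi> a * y = y * \<phi> a)"

text \<open>The defining relations of \<open>L_G\<close> for a family \<open>x\<close> of elements indexed by the
  inner vertices, with \<open>Q\<close> the image of \<open>q\<close>.\<close>

definition LG_relations ::
  "'v set \<Rightarrow> ('v \<times> 'v) set \<Rightarrow> ('v \<Rightarrow> real \<times> real) \<Rightarrow> nat \<Rightarrow> (nat \<Rightarrow> 'v) \<Rightarrow> nat \<Rightarrow> (nat \<Rightarrow> 'v)
    \<Rightarrow> 'a::ring_1 \<Rightarrow> ('v \<Rightarrow> 'a) \<Rightarrow> bool"
where
  "LG_relations V E pos m r n c Q x \<longleftrightarrow>
     (\<forall>u\<in>inner_vertices V m r n c. \<forall>v\<in>inner_vertices V m r n c. u \<noteq> v \<longrightarrow>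
        (hpath E pos u v \<longrightarrow> x u * x v = Q * (x v * x u)) \<and>
        (vpath E pos u v \<longrightarrow> x v * x u = Q * (x u * x v)) \<and>
        (\<not> hpath E pos u v \<and> \<not> hpath E pos v u \<and> \<not> vpath E pos u v \<and> \<not> vpath E pos v u
           \<longrightarrow> x u * x v = x v * x u))"

text \<open>\<open>xi w\<close> is the inverse of \<open>x w\<close>; \<open>S\<close> is the set of sources.\<close>

definition edge_wt :: "('v \<Rightarrow> real \<times> real) \<Rightarrow> 'v set \<Rightarrow> ('v \<Rightarrow> 'a::ring_1) \<Rightarrow> ('v \<Rightarrow> 'a) \<Rightarrow> 'v \<Rightarrow> 'v \<Rightarrow> 'a" where
  "edge_wt pos S x xi u v =
     (if u \<in> S then x v else if H_edge pos u v then xi u * x v else 1)"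

fun path_wt :: "('v \<Rightarrow> 'v \<Rightarrow> 'a::ring_1) \<Rightarrow> 'v list \<Rightarrow> 'a" where
  "path_wt w (u # v # vs) = w u v * path_wt w (v # vs)"
| "path_wt w _ = 1"

definition path_entry :: "('v \<times> 'v) set \<Rightarrow> ('v \<Rightarrow> 'v \<Rightarrow> 'a::ring_1) \<Rightarrow> 'v \<Rightarrow> 'v \<Rightarrow> 'a" where
  "path_entry E w a b = (\<Sum>xs\<in>{xs. is_path E xs \<and> hd xs = a \<and> last xs = b}. path_wt w xs)"

end

theory Submission
  imports Defs
begin

text \<open>
  A path weight is a word in the generators \<open>x v\<close> and their inverses, and two generators
  \<open>q\<close>-commute with exponent \<open>1\<close>, \<open>-1\<close> or \<open>0\<close>, read off from the horizontal and vertical paths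
  between them. Hence any two path weights \<open>q\<close>-commute, and summing by parts along both paths
  shows that the exponent only depends on their end points and on the edges at their common
  vertices: it vanishes for disjoint source-to-sink paths, and it is \<open>\<plusminus>1\<close> for the change
  caused by exchanging the tails of two paths after their last common vertex, or their heads
  before their first one. These exchanges are involutions on the meeting pairs of paths, so
  summing over pairs of paths gives the four relations.

  Planarity enters through one separation property: the polyline of a source-to-sink path is a
  monotone staircase, and a path disjoint from it cannot have vertices both weakly below and
  weakly above it. This forces paths from \<open>r i\<close> to \<open>c k\<close> and from \<open>r l\<close> to \<open>c j\<close>
  (\<open>i < l\<close>, \<open>j < k\<close>) to meet, and it forces the edges at the exchange vertex to be the ones
  giving exponent \<open>\<plusminus>1\<close>.
\<close>

section \<open>Monotone staircases in the plane\<close>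

definition order_convex :: "'a::order set \<Rightarrow> bool" where
  "order_convex X \<longleftrightarrow> (\<forall>w1\<in>X. \<forall>w2\<in>X. \<forall>z. w1 \<le> z \<and> z \<le> w2 \<longrightarrow> z \<in> X)"

lemma order_convexD: "order_convex X \<Longrightarrow> w1 \<in> X \<Longrightarrow> w2 \<in> X \<Longrightarrow> w1 \<le> z \<Longrightarrow> z \<le> w2 \<Longrightarrow> z \<in> X"
  unfolding order_convex_def by blast

lemma closed_segment_SE_bounds:
  fixes a b p :: "real \<times> real"
  assumes p: "p \<in> closed_segment a b" and x: "fst a \<le> fst b" and y: "snd b \<le> snd a"
  shows "fst a \<le> fst p \<and> fst p \<le> fst b \<and> snd b \<le> snd p \<and> snd p \<le> snd a"
proof -
  obtain t where t: "0 \<le> t" "t \<le> 1" "p = (1 - t) *\<^sub>R a + t *\<^sub>R b"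
    using p by (auto simp: in_segment)
  have "fst p = (1 - t) * fst a + t * fst b" "snd p = (1 - t) * snd a + t * snd b"
    using t(3) by simp_all
  then have fp: "fst p = fst a + t * (fst b - fst a)" and sp: "snd p = snd a - t * (snd a - snd b)"
    by (simp_all add: algebra_simps)
  have "0 \<le> t * (fst b - fst a)" "t * (fst b - fst a) \<le> fst b - fst a"
    "0 \<le> t * (snd a - snd b)" "t * (snd a - snd b) \<le> snd a - snd b"
    using t x y by (simp_all add: mult_left_le_one_le)
  then show ?thesis using fp sp by linarith
qed

lemma closed_segment_horizontalI:
  fixes a b z :: "real \<times> real"
  assumes "snd a = snd z" "snd b = snd z" "fst a \<le> fst z" "fst z \<le> fst b"
  shows "z \<in> closed_segment a b"
proof (cases "fst a = fst b")
  case True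
  then have "z = a" using assms by (simp add: prod_eq_iff)
  then show ?thesis by simp
next
  case False
  define t where "t = (fst z - fst a) / (fst b - fst a)"
  have lt: "fst a < fst b" using False assms by linarith
  have t: "0 \<le> t" "t \<le> 1" using assms lt by (auto simp: t_def divide_simps)
  have "t * (fst b - fst a) = fst z - fst a" unfolding t_def using lt by simp
  then have "fst ((1 - t) *\<^sub>R a + t *\<^sub>R b) = fst z" by (simp add: algebra_simps)
  moreover have "snd ((1 - t) *\<^sub>R a + t *\<^sub>R b) = snd z" using assms by (simp add: algebra_simps)
  ultimately have "z = (1 - t) *\<^sub>R a + t *\<^sub>R b" by (simp add: prod_eq_iff)
  then show ?thesis using t by (auto simp: in_segment)
qed

lemma closed_segment_verticalI:
  fixes a b z :: "real \<times> real"
  assumes "fst a = fst z" "fst b = fst z" "snd b \<le> snd z" "snd z \<le> snd a"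
  shows "z \<in> closed_segment a b"
proof (cases "snd a = snd b")
  case True
  then have "z = a" using assms by (simp add: prod_eq_iff)
  then show ?thesis by simp
next
  case False
  define t where "t = (snd a - snd z) / (snd a - snd b)"
  have lt: "snd b < snd a" using False assms by linarith
  have t: "0 \<le> t" "t \<le> 1" using assms lt by (auto simp: t_def divide_simps)
  have "t * (snd a - snd b) = snd a - snd z" unfolding t_def using lt by simp
  then have "snd ((1 - t) *\<^sub>R a + t *\<^sub>R b) = snd z" by (simp add: algebra_simps)
  moreover have "fst ((1 - t) *\<^sub>R a + t *\<^sub>R b) = fst z" using assms by (simp add: algebra_simps)
  ultimately have "z = (1 - t) *\<^sub>R a + t *\<^sub>R b" by (simp add: prod_eq_iff)
  then show ?thesis using t by (auto simp: in_segment)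
qed

lemma order_convex_axis_segment:
  fixes a b :: "real \<times> real"
  assumes ab: "(snd a = snd b \<and> fst a \<le> fst b) \<or> (fst a = fst b \<and> snd b \<le> snd a)"
  shows "order_convex (closed_segment a b)"
  unfolding order_convex_def
proof (intro ballI allI impI)
  fix w1 w2 z assume w: "w1 \<in> closed_segment a b" "w2 \<in> closed_segment a b" and "w1 \<le> z \<and> z \<le> w2"
  then have le: "fst w1 \<le> fst z" "fst z \<le> fst w2" "snd w1 \<le> snd z" "snd z \<le> snd w2"
    by (auto simp: less_eq_prod_def)
  have "fst a \<le> fst b" "snd b \<le> snd a" using ab by auto
  note w1 = closed_segment_SE_bounds[OF w(1) this] and w2 = closed_segment_SE_bounds[OF w(2) this]
  show "z \<in> closed_segment a b" using ab
  proof
    assume "snd a = snd b \<and> fst a \<le> fst b"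
    then show ?thesis using w1 w2 le by (intro closed_segment_horizontalI) auto
  next
    assume "fst a = fst b \<and> snd b \<le> snd a"
    then show ?thesis using w1 w2 le by (intro closed_segment_verticalI) auto
  qed
qed

text \<open>A point between a point of \<open>U\<close> and a point of \<open>T\<close> shares a coordinate with \<open>b\<close>, hence
  is comparable with \<open>b\<close>.\<close>

lemma order_convex_Un:
  fixes U T :: "(real \<times> real) set"
  assumes U: "order_convex U" "b \<in> U" "\<And>u. u \<in> U \<Longrightarrow> fst u \<le> fst b \<and> snd b \<le> snd u"
    and T: "order_convex T" "b \<in> T" "\<And>t. t \<in> T \<Longrightarrow> fst b \<le> fst t \<and> snd t \<le> snd b"
  shows "order_convex (U \<union> T)"
  unfolding order_convex_def
proof (intro ballI allI impI)
  fix w1 w2 z assume w: "w1 \<in> U \<union> T" "w2 \<in> U \<union> T" and z: "w1 \<le> z \<and> z \<le> w2"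
  then have le: "fst w1 \<le> fst z" "fst z \<le> fst w2" "snd w1 \<le> snd z" "snd z \<le> snd w2"
    by (auto simp: less_eq_prod_def)
  consider "w1 \<in> U" "w2 \<in> U" | "w1 \<in> T" "w2 \<in> T" | "w1 \<in> T" "w2 \<in> U" | "w1 \<in> U" "w2 \<in> T"
    using w by blast
  then show "z \<in> U \<union> T"
  proof cases
    case 1
    then show ?thesis using z order_convexD[OF U(1)] by blast
  next
    case 2
    then show ?thesis using z order_convexD[OF T(1)] by blast
  next
    case 3
    have "fst b \<le> fst w1" "fst w2 \<le> fst b" using T(3)[OF 3(1)] U(3)[OF 3(2)] by auto
    then have "fst z = fst b" using le by linarith
    then have "z \<le> b \<or> b \<le> z" by (auto simp: less_eq_prod_def)
    then show ?thesis using 3 z order_convexD[OF U(1)] order_convexD[OF T(1)] U(2) T(2) by blast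
  next
    case 4
    have "snd w2 \<le> snd b" "snd b \<le> snd w1" using T(3)[OF 4(2)] U(3)[OF 4(1)] by auto
    then have "snd z = snd b" using le by linarith
    then have "z \<le> b \<or> b \<le> z" by (auto simp: less_eq_prod_def)
    then show ?thesis using 4 z order_convexD[OF U(1)] order_convexD[OF T(1)] U(2) T(2) by blast
  qed
qed

lemma closed_translates_compact:
  fixes K C :: "'a::real_normed_vector set"
  assumes "compact K" and "closed C"
  shows "closed {z. \<exists>w\<in>K. z - w \<in> C}"
proof -
  have "{z. \<exists>w\<in>K. z - w \<in> C} = (\<Union>d\<in>C. \<Union>w\<in>K. {d + w})"
  proof (intro set_eqI iffI)
    fix z assume "z \<in> {z. \<exists>w\<in>K. z - w \<in> C}"
    then obtain w where "w \<in> K" "z - w \<in> C" by blast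
    then show "z \<in> (\<Union>d\<in>C. \<Union>w\<in>K. {d + w})" by (intro UN_I[of "z - w"] UN_I[of w]) auto
  next
    fix z assume "z \<in> (\<Union>d\<in>C. \<Union>w\<in>K. {d + w})"
    then obtain d w where "d \<in> C" "w \<in> K" "z = d + w" by blast
    then show "z \<in> {z. \<exists>w\<in>K. z - w \<in> C}" by (intro CollectI bexI[of _ w]) auto
  qed
  then show ?thesis using closed_compact_sums[OF assms(2,1)] by simp
qed

definition up_closure :: "'a::order set \<Rightarrow> 'a set" where
  "up_closure P = {z. \<exists>w\<in>P. w \<le> z}"

definition down_closure :: "'a::order set \<Rightarrow> 'a set" where
  "down_closure P = {z. \<exists>w\<in>P. z \<le> w}"

lemma up_closure_Int_down_closure: "order_convex P \<Longrightarrow> up_closure P \<inter> down_closure P \<subseteq> P"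
  unfolding order_convex_def up_closure_def down_closure_def by blast

lemma closed_up_closure:
  fixes P :: "(real \<times> real) set"
  assumes "compact P"
  shows "closed (up_closure P)"
proof -
  have eq: "up_closure P = {z. \<exists>w\<in>P. z - w \<in> {d. 0 \<le> d}}"
    by (auto simp: up_closure_def less_eq_prod_def)
  have "{d :: real \<times> real. 0 \<le> d} = {0..} \<times> {0..}"
    by (auto simp: less_eq_prod_def)
  then have "closed {d :: real \<times> real. 0 \<le> d}" by (simp add: closed_Times)
  then show ?thesis unfolding eq by (rule closed_translates_compact[OF assms])
qed

lemma closed_down_closure:
  fixes P :: "(real \<times> real) set"
  assumes "compact P"
  shows "closed (down_closure P)"
proof -
  have eq: "down_closure P = {z. \<exists>w\<in>P. z - w \<in> {d. d \<le> 0}}"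
    by (auto simp: down_closure_def less_eq_prod_def)
  have "{d :: real \<times> real. d \<le> 0} = {..0} \<times> {..0}"
    by (auto simp: less_eq_prod_def)
  then have "closed {d :: real \<times> real. d \<le> 0}" by (simp add: closed_Times)
  then show ?thesis unfolding eq by (rule closed_translates_compact[OF assms])
qed

lemma convex_orthant: "convex {z :: real \<times> real. p \<le> z}"
proof -
  have "{z :: real \<times> real. p \<le> z} = {fst p..} \<times> {snd p..}"
    by (auto simp: less_eq_prod_def)
  then show ?thesis by (simp add: convex_Times)
qed

lemma trancl_into_iff_unique_pred:
  assumes "(a, b) \<in> R" and "\<And>a'. (a', b) \<in> R \<Longrightarrow> a' = a"
  shows "(z, b) \<in> R\<^sup>+ \<longleftrightarrow> z = a \<or> (z, a) \<in> R\<^sup>+"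
proof
  assume "(z, b) \<in> R\<^sup>+"
  then show "z = a \<or> (z, a) \<in> R\<^sup>+"
    by (cases rule: tranclE) (use assms(2) in blast)+
next
  assume "z = a \<or> (z, a) \<in> R\<^sup>+"
  then show "(z, b) \<in> R\<^sup>+" using assms(1) by (blast intro: trancl_into_trancl)
qed

lemma trancl_from_iff_unique_succ:
  assumes "(a, b) \<in> R" and "\<And>b'. (a, b') \<in> R \<Longrightarrow> b' = b"
  shows "(a, z) \<in> R\<^sup>+ \<longleftrightarrow> z = b \<or> (b, z) \<in> R\<^sup>+"
proof
  assume "(a, z) \<in> R\<^sup>+"
  then show "z = b \<or> (b, z) \<in> R\<^sup>+"
    by (cases rule: converse_tranclE) (use assms(2) in blast)+
next
  assume "z = b \<or> (b, z) \<in> R\<^sup>+"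
  then show "(a, z) \<in> R\<^sup>+" using assms(1) by (blast intro: trancl_into_trancl2)
qed

lemma is_path_Cons_Cons: "is_path E (a # b # xs) \<longleftrightarrow> (a, b) \<in> E \<and> is_path E (b # xs)"
  by (simp add: is_path_def)

lemma is_path_appendI: "is_path E (xs @ [v]) \<Longrightarrow> is_path E (v # ys) \<Longrightarrow> is_path E (xs @ v # ys)"
  by (auto simp: is_path_def successively_append_iff successively_Cons)

lemma is_path_appendD1: "is_path E (xs @ v # ys) \<Longrightarrow> is_path E (xs @ [v])"
  by (auto simp: is_path_def successively_append_iff successively_Cons)

lemma is_path_appendD2: "is_path E (xs @ v # ys) \<Longrightarrow> is_path E (v # ys)"
  by (auto simp: is_path_def successively_append_iff successively_Cons)

lemma is_path_snoc_snoc: "is_path E (xs @ [a, b]) \<longleftrightarrow> is_path E (xs @ [a]) \<and> (a, b) \<in> E"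
  by (auto simp: is_path_def successively_append_iff successively_Cons)

lemma is_path_butlast: "is_path E (xs @ [v]) \<Longrightarrow> xs \<noteq> [] \<Longrightarrow> is_path E xs"
  by (auto simp: is_path_def successively_append_iff)

lemma is_path_last_edge: "is_path E (xs @ [v]) \<Longrightarrow> xs \<noteq> [] \<Longrightarrow> (last xs, v) \<in> E"
  by (induction xs rule: rev_induct) (simp_all add: is_path_snoc_snoc)

lemma is_path_first_edge: "is_path E (v # xs) \<Longrightarrow> xs \<noteq> [] \<Longrightarrow> (v, hd xs) \<in> E"
  by (cases xs) (auto simp: is_path_Cons_Cons)

lemma is_path_trancl: "is_path E (a # xs) \<Longrightarrow> z \<in> set xs \<Longrightarrow> (a, z) \<in> E\<^sup>+"
proof (induction xs arbitrary: a)
  case (Cons b xs)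
  then have "(a, b) \<in> E" "is_path E (b # xs)" by (auto simp: is_path_Cons_Cons)
  then show ?case using Cons.IH Cons.prems(2) by (cases "z = b") (auto intro: trancl_into_trancl2)
qed simp

lemma path_wt_append: "path_wt w (xs @ v # ys) = path_wt w (xs @ [v]) * path_wt w (v # ys)"
  by (induction xs rule: induct_list012) (simp_all add: mult.assoc)

lemma sum_mult_sum_Times:
  fixes f g :: "'b \<Rightarrow> 'a::semiring_0"
  shows "sum f A * sum g B = (\<Sum>t\<in>A \<times> B. f (fst t) * g (snd t))"
  by (simp add: sum_product sum.cartesian_product case_prod_beta)

lemma sum_mult_sum_Times_swap:
  fixes f g :: "'b \<Rightarrow> 'a::semiring_0"
  shows "sum g B * sum f A = (\<Sum>t\<in>A \<times> B. g (snd t) * f (fst t))"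
  by (subst sum_product, subst sum.swap) (simp add: sum.cartesian_product case_prod_beta)

section \<open>Central powers of \<open>q\<close>\<close>

lemma K_algebra_map_one: "K_algebra_map \<phi> \<Longrightarrow> \<phi> 1 = 1"
  unfolding K_algebra_map_def by blast

lemma K_algebra_map_mult: "K_algebra_map \<phi> \<Longrightarrow> \<phi> (a * b) = \<phi> a * \<phi> b"
  unfolding K_algebra_map_def by blast

lemma K_algebra_map_central: "K_algebra_map \<phi> \<Longrightarrow> \<phi> a * y = y * \<phi> a"
  unfolding K_algebra_map_def by blast

locale q_scalar =
  fixes \<phi> :: "'k::field \<Rightarrow> 'a::ring_1" and q :: 'k
  assumes K_algebra: "K_algebra_map \<phi>" and q_nonzero: "q \<noteq> 0"
begin

definition qpow :: "int \<Rightarrow> 'a" where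
  "qpow k = \<phi> (q powi k)"

lemma qpow_add: "qpow (k1 + k2) = qpow k1 * qpow k2"
  unfolding qpow_def using q_nonzero K_algebra_map_mult[OF K_algebra] by (simp add: power_int_add)

lemma qpow_central: "qpow k * y = y * qpow k"
  unfolding qpow_def by (rule K_algebra_map_central[OF K_algebra])

lemma qpow_left_commute: "y * (qpow k * z) = qpow k * (y * z)"
  by (metis mult.assoc qpow_central)

lemma qpow_0 [simp]: "qpow 0 = 1"
  unfolding qpow_def by (simp add: K_algebra_map_one[OF K_algebra])

lemma qpow_1: "qpow 1 = \<phi> q"
  by (simp add: qpow_def)

lemma qpow_minus_1: "qpow (-1) = \<phi> (inverse q)"
  by (simp add: qpow_def power_int_minus)

lemma qpow_minus_cancel: "qpow (- k) * qpow k = 1"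
  using qpow_add[of "- k" k] by simp

lemma phi_q_inverse: "\<phi> q * \<phi> (inverse q) = 1" "\<phi> (inverse q) * \<phi> q = 1"
  using qpow_add[of 1 "-1"] qpow_add[of "-1" 1] by (simp_all add: qpow_1 qpow_minus_1)

lemma q_commute_inverse_left:
  assumes "a * b = qpow k * (b * a)" "a * a' = 1" "a' * a = 1"
  shows "a' * b = qpow (- k) * (b * a')"
proof -
  have ba: "b * a = qpow (- k) * (a * b)"
    using assms(1) by (simp add: mult.assoc[symmetric] qpow_minus_cancel)
  have "a' * b = a' * b * (a * a')" using assms by simp
  also have "\<dots> = a' * (b * a) * a'" by (simp only: mult.assoc)
  also have "\<dots> = qpow (- k) * ((a' * a) * b * a')" by (simp only: ba qpow_left_commute mult.assoc)
  also have "\<dots> = qpow (- k) * (b * a')" using assms by simp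
  finally show ?thesis .
qed

lemma q_commute_inverse_right:
  assumes "a * b = qpow k * (b * a)" "b * b' = 1" "b' * b = 1"
  shows "a * b' = qpow (- k) * (b' * a)"
proof -
  have ba: "b * a = qpow (- k) * (a * b)"
    using assms(1) by (simp add: mult.assoc[symmetric] qpow_minus_cancel)
  have "a * b' = (b' * b) * a * b'" using assms by simp
  also have "\<dots> = b' * (b * a) * b'" by (simp only: mult.assoc)
  also have "\<dots> = qpow (- k) * (b' * a * (b * b'))" by (simp only: ba qpow_left_commute mult.assoc)
  also have "\<dots> = qpow (- k) * (b' * a)" using assms by simp
  finally show ?thesis .
qed

lemma q_commute_prod_list_right:
  assumes "\<forall>\<beta>\<in>set w. f \<alpha> * f \<beta> = qpow (e \<alpha> \<beta>) * (f \<beta> * f \<alpha>)"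
  shows "f \<alpha> * prod_list (map f w) = qpow (sum_list (map (e \<alpha>) w)) * (prod_list (map f w) * f \<alpha>)"
  using assms
proof (induction w)
  case Nil then show ?case by simp
next
  case (Cons \<beta> w)
  define P where "P = prod_list (map f w)"
  define s where "s = sum_list (map (e \<alpha>) w)"
  have head: "f \<alpha> * f \<beta> = qpow (e \<alpha> \<beta>) * (f \<beta> * f \<alpha>)" using Cons.prems by simp
  have IH: "f \<alpha> * P = qpow s * (P * f \<alpha>)" using Cons unfolding P_def s_def by simp
  have "f \<alpha> * (f \<beta> * P) = (f \<alpha> * f \<beta>) * P" by (simp only: mult.assoc)
  also have "\<dots> = (qpow (e \<alpha> \<beta>) * (f \<beta> * f \<alpha>)) * P" by (simp only: head)
  also have "\<dots> = qpow (e \<alpha> \<beta>) * (f \<beta> * (f \<alpha> * P))" by (simp only: mult.assoc)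
  also have "\<dots> = qpow (e \<alpha> \<beta>) * (f \<beta> * (qpow s * (P * f \<alpha>)))" by (simp only: IH)
  also have "\<dots> = qpow (e \<alpha> \<beta>) * ((f \<beta> * qpow s) * (P * f \<alpha>))" by (simp only: mult.assoc)
  also have "\<dots> = qpow (e \<alpha> \<beta>) * ((qpow s * f \<beta>) * (P * f \<alpha>))" by (simp only: qpow_central[of s "f \<beta>"])
  also have "\<dots> = (qpow (e \<alpha> \<beta>) * qpow s) * (f \<beta> * P * f \<alpha>)" by (simp only: mult.assoc)
  also have "\<dots> = qpow (e \<alpha> \<beta> + s) * (f \<beta> * P * f \<alpha>)" by (simp only: qpow_add)
  finally show ?case unfolding P_def s_def by (simp add: mult.assoc)
qed

lemma q_commute_prod_list:
  assumes "\<forall>\<alpha>\<in>set w1. \<forall>\<beta>\<in>set w2. f \<alpha> * f \<beta> = qpow (e \<alpha> \<beta>) * (f \<beta> * f \<alpha>)"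
  shows "prod_list (map f w1) * prod_list (map f w2)
        = qpow (sum_list (map (\<lambda>\<alpha>. sum_list (map (e \<alpha>) w2)) w1)) * (prod_list (map f w2) * prod_list (map f w1))"
  using assms
proof (induction w1)
  case Nil then show ?case by simp
next
  case (Cons \<alpha> w1)
  define P1 where "P1 = prod_list (map f w1)"
  define P2 where "P2 = prod_list (map f w2)"
  define s1 where "s1 = sum_list (map (\<lambda>\<alpha>. sum_list (map (e \<alpha>) w2)) w1)"
  define s2 where "s2 = sum_list (map (e \<alpha>) w2)"
  have IH: "P1 * P2 = qpow s1 * (P2 * P1)" using Cons unfolding P1_def P2_def s1_def by simp
  have head: "f \<alpha> * P2 = qpow s2 * (P2 * f \<alpha>)"
    using q_commute_prod_list_right[of w2 f \<alpha> e] Cons.prems unfolding P2_def s2_def by simp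
  have "(f \<alpha> * P1) * P2 = f \<alpha> * (P1 * P2)" by (simp only: mult.assoc)
  also have "\<dots> = f \<alpha> * (qpow s1 * (P2 * P1))" by (simp only: IH)
  also have "\<dots> = (f \<alpha> * qpow s1) * (P2 * P1)" by (simp only: mult.assoc)
  also have "\<dots> = (qpow s1 * f \<alpha>) * (P2 * P1)" by (simp only: qpow_central[of s1 "f \<alpha>"])
  also have "\<dots> = qpow s1 * ((f \<alpha> * P2) * P1)" by (simp only: mult.assoc)
  also have "\<dots> = qpow s1 * ((qpow s2 * (P2 * f \<alpha>)) * P1)" by (simp only: head)
  also have "\<dots> = (qpow s1 * qpow s2) * (P2 * (f \<alpha> * P1))" by (simp only: mult.assoc)
  also have "\<dots> = qpow (s2 + s1) * (P2 * (f \<alpha> * P1))" by (simp only: qpow_add add.commute)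
  finally show ?case unfolding P1_def P2_def s1_def s2_def by simp
qed

lemma qpow_diff_add: "qpow (k1 + k2 - k3) * qpow k3 = qpow k1 * qpow k2"
proof -
  have "qpow (k1 + k2 - k3) * qpow k3 = qpow (k1 + k2 - k3 + k3)" by (simp only: qpow_add)
  also have "\<dots> = qpow (k1 + k2)" by simp
  finally show ?thesis by (simp only: qpow_add)
qed

text \<open>Exchanging the second factors of two products \<open>a b\<close> and \<open>c d\<close> (and, below, the first
  factors) costs the \<open>q\<close>-power accumulated by moving \<open>b\<close> past \<open>c d\<close> and then \<open>c\<close> back past \<open>d\<close>.\<close>

lemma q_commute_exchange_right:
  assumes bc: "b * c = qpow k1 * (c * b)" and bd: "b * d = qpow k2 * (d * b)"
    and dc: "d * c = qpow k3 * (c * d)"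
  shows "(a * b) * (c * d) = qpow (k1 + k2 - k3) * ((a * d) * (c * b))"
proof -
  have "(a * b) * (c * d) = a * ((b * c) * d)" by (simp only: mult.assoc)
  also have "\<dots> = a * ((qpow k1 * (c * b)) * d)" by (simp only: bc)
  also have "\<dots> = qpow k1 * (a * (c * (b * d)))" by (simp only: mult.assoc qpow_left_commute[of a k1])
  also have "\<dots> = qpow k1 * (a * (c * (qpow k2 * (d * b))))" by (simp only: bd)
  also have "\<dots> = qpow k1 * (qpow k2 * (a * (c * (d * b))))" by (simp only: qpow_left_commute[of c k2] qpow_left_commute[of a k2])
  also have "\<dots> = (qpow k1 * qpow k2) * (a * (c * (d * b)))" by (simp only: mult.assoc)
  finally have lhs: "(a * b) * (c * d) = (qpow k1 * qpow k2) * (a * (c * (d * b)))" .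
  have "(a * d) * (c * b) = a * ((d * c) * b)" by (simp only: mult.assoc)
  also have "\<dots> = a * ((qpow k3 * (c * d)) * b)" by (simp only: dc)
  also have "\<dots> = qpow k3 * (a * (c * (d * b)))" by (simp only: mult.assoc qpow_left_commute[of a k3])
  finally have rhs: "(a * d) * (c * b) = qpow k3 * (a * (c * (d * b)))" .
  have "qpow (k1 + k2 - k3) * ((a * d) * (c * b)) = (qpow (k1 + k2 - k3) * qpow k3) * (a * (c * (d * b)))"
    by (subst rhs) (simp only: mult.assoc)
  also have "\<dots> = (qpow k1 * qpow k2) * (a * (c * (d * b)))" by (simp only: qpow_diff_add)
  finally show ?thesis using lhs by simp
qed

lemma q_commute_exchange_left:
  assumes ca: "c * a = qpow k1 * (a * c)" and da: "d * a = qpow k2 * (a * d)"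
    and dc: "d * c = qpow k3 * (c * d)"
  shows "(c * d) * (a * b) = qpow (k1 + k2 - k3) * ((a * d) * (c * b))"
proof -
  have "(c * d) * (a * b) = c * ((d * a) * b)" by (simp only: mult.assoc)
  also have "\<dots> = c * ((qpow k2 * (a * d)) * b)" by (simp only: da)
  also have "\<dots> = qpow k2 * (c * (a * (d * b)))" by (simp only: mult.assoc qpow_left_commute[of c k2])
  also have "\<dots> = qpow k2 * ((c * a) * (d * b))" by (simp only: mult.assoc)
  also have "\<dots> = qpow k2 * ((qpow k1 * (a * c)) * (d * b))" by (simp only: ca)
  also have "\<dots> = qpow k2 * (qpow k1 * (a * (c * (d * b))))" by (simp only: mult.assoc)
  also have "\<dots> = (qpow k1 * qpow k2) * (a * (c * (d * b)))"
    by (simp only: mult.assoc[symmetric] qpow_central[of k2 "qpow k1"])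
  finally have lhs: "(c * d) * (a * b) = (qpow k1 * qpow k2) * (a * (c * (d * b)))" .
  have "(a * d) * (c * b) = a * ((d * c) * b)" by (simp only: mult.assoc)
  also have "\<dots> = a * ((qpow k3 * (c * d)) * b)" by (simp only: dc)
  also have "\<dots> = qpow k3 * (a * (c * (d * b)))" by (simp only: mult.assoc qpow_left_commute[of a k3])
  finally have rhs: "(a * d) * (c * b) = qpow k3 * (a * (c * (d * b)))" .
  have "qpow (k1 + k2 - k3) * ((a * d) * (c * b)) = (qpow (k1 + k2 - k3) * qpow k3) * (a * (c * (d * b)))"
    by (subst rhs) (simp only: mult.assoc)
  also have "\<dots> = (qpow k1 * qpow k2) * (a * (c * (d * b)))" by (simp only: qpow_diff_add)
  finally show ?thesis using lhs by simp
qed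

end

locale se_graph =
  fixes V :: "'v set" and E :: "('v \<times> 'v) set" and pos :: "'v \<Rightarrow> real \<times> real"
    and m :: nat and r :: "nat \<Rightarrow> 'v" and n :: nat and c :: "nat \<Rightarrow> 'v"
  assumes SE_graph: "SE_graph V E pos m r n c"
begin

abbreviation "S \<equiv> sources m r"
abbreviation "K \<equiv> sinks n c"
abbreviation "W \<equiv> inner_vertices V m r n c"
abbreviation "px z \<equiv> fst (pos z)"
abbreviation "py z \<equiv> snd (pos z)"
abbreviation "HE a b \<equiv> H_edge pos a b"
abbreviation "VE a b \<equiv> V_edge pos a b"
abbreviation "hp u v \<equiv> hpath E pos u v"
abbreviation "vp u v \<equiv> vpath E pos u v"

lemma SE_graph_conds:
  "finite V"
  "E \<subseteq> V \<times> V"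
  "inj_on pos V"
  "\<forall>e\<in>E. \<forall>e'\<in>E. e \<noteq> e' \<longrightarrow>
     edge_seg pos e \<inter> edge_seg pos e' \<subseteq> pos ` ({fst e, snd e} \<inter> {fst e', snd e'})"
  "\<forall>w\<in>V. \<forall>e\<in>E. w \<notin> {fst e, snd e} \<longrightarrow> pos w \<notin> edge_seg pos e"
  "\<forall>(u, v)\<in>E. HE u v \<or> VE u v"
  "S \<subseteq> V"
  "\<forall>i\<in>{1..m}. \<forall>i'\<in>{1..m}. px (r i) = px (r i')"
  "\<forall>i\<in>{1..m}. \<forall>i'\<in>{1..m}. i < i' \<longrightarrow> py (r i) < py (r i')"
  "\<forall>j\<in>{1..n}. \<forall>j'\<in>{1..n}. py (c j) = py (c j')"
  "\<forall>j\<in>{1..n}. \<forall>j'\<in>{1..n}. j < j' \<longrightarrow> px (c j) < px (c j')"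
  "\<forall>(u, v)\<in>E. u \<in> S \<or> v \<in> S \<longrightarrow> HE u v"
  "\<forall>(u, v)\<in>E. u \<in> K \<or> v \<in> K \<longrightarrow> VE u v"
  "\<forall>(u, v)\<in>E. v \<notin> S \<and> u \<notin> K"
  "\<forall>w\<in>V. \<exists>xs. is_path E xs \<and> hd xs \<in> S \<and> last xs \<in> K \<and> w \<in> set xs"
  using SE_graph unfolding SE_graph_def by - (elim conjE, assumption)+

lemma finite_V: "finite V"
  using SE_graph_conds(1) .

lemma edge_in_V: "(a, b) \<in> E \<Longrightarrow> a \<in> V \<and> b \<in> V"
  using SE_graph_conds(2) by blast

lemma inj_pos: "inj_on pos V"
  using SE_graph_conds(3) .

lemma edge_segs_meet_at_ends:
  "e \<in> E \<Longrightarrow> e' \<in> E \<Longrightarrow> e \<noteq> e' \<Longrightarrow>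
     edge_seg pos e \<inter> edge_seg pos e' \<subseteq> pos ` ({fst e, snd e} \<inter> {fst e', snd e'})"
  using SE_graph_conds(4) by blast

lemma vertex_on_edge_seg: "w \<in> V \<Longrightarrow> e \<in> E \<Longrightarrow> pos w \<in> edge_seg pos e \<Longrightarrow> w = fst e \<or> w = snd e"
  using SE_graph_conds(5) by blast

lemma edge_H_or_V: "(a, b) \<in> E \<Longrightarrow> HE a b \<or> VE a b"
  using SE_graph_conds(6) by blast

lemma sources_in_V: "S \<subseteq> V"
  using SE_graph_conds(7) .

lemma sources_same_x: "i \<in> {1..m} \<Longrightarrow> i' \<in> {1..m} \<Longrightarrow> px (r i) = px (r i')"
  using SE_graph_conds(8) by blast

lemma sources_y_less: "i \<in> {1..m} \<Longrightarrow> i' \<in> {1..m} \<Longrightarrow> i < i' \<Longrightarrow> py (r i) < py (r i')"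
  using SE_graph_conds(9) by blast

lemma sinks_same_y: "j \<in> {1..n} \<Longrightarrow> j' \<in> {1..n} \<Longrightarrow> py (c j) = py (c j')"
  using SE_graph_conds(10) by blast

lemma sinks_x_less: "j \<in> {1..n} \<Longrightarrow> j' \<in> {1..n} \<Longrightarrow> j < j' \<Longrightarrow> px (c j) < px (c j')"
  using SE_graph_conds(11) by blast

lemma source_edge_H: "(a, b) \<in> E \<Longrightarrow> a \<in> S \<or> b \<in> S \<Longrightarrow> HE a b"
  using SE_graph_conds(12) by blast

lemma sink_edge_V: "(a, b) \<in> E \<Longrightarrow> a \<in> K \<or> b \<in> K \<Longrightarrow> VE a b"
  using SE_graph_conds(13) by blast

lemma no_edge_into_source: "(a, b) \<in> E \<Longrightarrow> b \<notin> S"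
  using SE_graph_conds(14) by blast

lemma no_edge_out_of_sink: "(a, b) \<in> E \<Longrightarrow> a \<notin> K"
  using SE_graph_conds(14) by blast

lemma vertex_on_full_path: "w \<in> V \<Longrightarrow> \<exists>xs. is_path E xs \<and> hd xs \<in> S \<and> last xs \<in> K \<and> w \<in> set xs"
  using SE_graph_conds(15) by blast

lemma not_H_and_V: "\<not> (HE a b \<and> VE a b)"
  by (auto simp: H_edge_def V_edge_def)

lemma edge_V_iff_not_H: "(a, b) \<in> E \<Longrightarrow> VE a b \<longleftrightarrow> \<not> HE a b"
  using edge_H_or_V not_H_and_V by blast

lemma H_edge_head_inner: "(a, b) \<in> E \<Longrightarrow> HE a b \<Longrightarrow> b \<in> W"
  using sink_edge_V not_H_and_V no_edge_into_source edge_in_V by (auto simp: inner_vertices_def)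

lemma H_edge_tail_inner: "(a, b) \<in> E \<Longrightarrow> HE a b \<Longrightarrow> a \<notin> S \<Longrightarrow> a \<in> W"
  using sink_edge_V not_H_and_V edge_in_V by (auto simp: inner_vertices_def)

lemma trancl_edges_SE:
  "(a, b) \<in> E\<^sup>+ \<Longrightarrow> px a \<le> px b \<and> py b \<le> py a \<and> (px a < px b \<or> py b < py a)"
proof (induction rule: trancl_induct)
  case (base b)
  then show ?case using edge_H_or_V[of a b] by (auto simp: H_edge_def V_edge_def)
next
  case (step b b')
  then show ?case using edge_H_or_V[of b b'] by (auto simp: H_edge_def V_edge_def)
qed

lemma trancl_edges_neq: "(a, b) \<in> E\<^sup>+ \<Longrightarrow> a \<noteq> b"
  using trancl_edges_SE by fastforce

text \<open>Two distinct parallel edges out of (or into) the same vertex would overlap, so that the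
  shorter one would end on the longer one.\<close>

lemma H_out_unique:
  assumes "(a, b) \<in> E" "(a, b') \<in> E" "HE a b" "HE a b'"
  shows "b = b'"
proof -
  have *: "b = b'" if "(a, b) \<in> E" "(a, b') \<in> E" "HE a b" "HE a b'" "px b \<le> px b'" for b b'
  proof -
    have "pos b \<in> edge_seg pos (a, b')"
      using that(3-5) unfolding edge_seg_def H_edge_def by (intro closed_segment_horizontalI) auto
    moreover have "b \<noteq> a" using that(3) by (auto simp: H_edge_def)
    ultimately show ?thesis using vertex_on_edge_seg[OF _ that(2)] edge_in_V[OF that(1)] by auto
  qed
  show ?thesis using *[OF assms] *[OF assms(2,1,4,3)] by (metis linorder_linear)
qed

lemma H_in_unique:
  assumes "(a, b) \<in> E" "(a', b) \<in> E" "HE a b" "HE a' b"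
  shows "a = a'"
proof -
  have *: "a = a'" if "(a, b) \<in> E" "(a', b) \<in> E" "HE a b" "HE a' b" "px a \<le> px a'" for a a'
  proof -
    have "pos a' \<in> edge_seg pos (a, b)"
      using that(3-5) unfolding edge_seg_def H_edge_def by (intro closed_segment_horizontalI) auto
    moreover have "a' \<noteq> b" using that(4) by (auto simp: H_edge_def)
    ultimately show ?thesis using vertex_on_edge_seg[OF _ that(1)] edge_in_V[OF that(2)] by auto
  qed
  show ?thesis using *[OF assms] *[OF assms(2,1,4,3)] by (metis linorder_linear)
qed

lemma V_out_unique:
  assumes "(a, b) \<in> E" "(a, b') \<in> E" "VE a b" "VE a b'"
  shows "b = b'"
proof -
  have *: "b = b'" if "(a, b) \<in> E" "(a, b') \<in> E" "VE a b" "VE a b'" "py b' \<le> py b" for b b'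
  proof -
    have "pos b \<in> edge_seg pos (a, b')"
      using that(3-5) unfolding edge_seg_def V_edge_def by (intro closed_segment_verticalI) auto
    moreover have "b \<noteq> a" using that(3) by (auto simp: V_edge_def)
    ultimately show ?thesis using vertex_on_edge_seg[OF _ that(2)] edge_in_V[OF that(1)] by auto
  qed
  show ?thesis using *[OF assms] *[OF assms(2,1,4,3)] by (metis linorder_linear)
qed

lemma V_in_unique:
  assumes "(a, b) \<in> E" "(a', b) \<in> E" "VE a b" "VE a' b"
  shows "a = a'"
proof -
  have *: "a = a'" if "(a, b) \<in> E" "(a', b) \<in> E" "VE a b" "VE a' b" "py a' \<le> py a" for a a'
  proof -
    have "pos a' \<in> edge_seg pos (a, b)"
      using that(3-5) unfolding edge_seg_def V_edge_def by (intro closed_segment_verticalI) auto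
    moreover have "a' \<noteq> b" using that(4) by (auto simp: V_edge_def)
    ultimately show ?thesis using vertex_on_edge_seg[OF _ that(1)] edge_in_V[OF that(2)] by auto
  qed
  show ?thesis using *[OF assms] *[OF assms(2,1,4,3)] by (metis linorder_linear)
qed

lemma path_distinct: "is_path E xs \<Longrightarrow> distinct xs"
proof (induction xs rule: induct_list012)
  case (3 a b xs)
  have "a \<notin> set (b # xs)"
  proof
    assume "a \<in> set (b # xs)"
    with "3.prems" have "(a, a) \<in> E\<^sup>+" by (rule is_path_trancl)
    then show False using trancl_edges_neq by blast
  qed
  moreover have "is_path E (b # xs)" using "3.prems" by (simp add: is_path_Cons_Cons)
  ultimately show ?case using "3.IH"(2) by simp
qed simp_all

lemma path_last_notin: "is_path E (xs @ [v]) \<Longrightarrow> v \<notin> set xs"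
  using path_distinct by fastforce

lemma path_SE:
  assumes "is_path E (a # xs)" "z \<in> set xs"
  shows "px a \<le> px z \<and> py z \<le> py a"
  using trancl_edges_SE[OF is_path_trancl[OF assms]] by simp

lemma path_in_V: "is_path E xs \<Longrightarrow> hd xs \<in> V \<Longrightarrow> set xs \<subseteq> V"
proof (induction xs rule: induct_list012)
  case (3 a b xs)
  then have "(a, b) \<in> E" "is_path E (b # xs)" by (simp_all add: is_path_Cons_Cons)
  then show ?case using "3.IH"(2) "3.prems"(2) edge_in_V by simp
qed simp_all

lemma path_inner_not_source:
  assumes "is_path E (xs @ v # ys)" "xs \<noteq> []"
  shows "v \<notin> S"
proof -
  have "is_path E (xs @ [v])" using assms(1) by (rule is_path_appendD1)
  then have "(last xs, v) \<in> E" using assms(2) by (rule is_path_last_edge)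
  then show ?thesis by (rule no_edge_into_source)
qed

lemma path_inner_not_sink:
  assumes "is_path E (xs @ v # ys)" "ys \<noteq> []"
  shows "v \<notin> K"
proof -
  have "is_path E (v # ys)" using assms(1) by (rule is_path_appendD2)
  then have "(v, hd ys) \<in> E" using assms(2) by (rule is_path_first_edge)
  then show ?thesis by (rule no_edge_out_of_sink)
qed

lemma full_path_in_V: "is_path E xs \<Longrightarrow> hd xs \<in> S \<Longrightarrow> set xs \<subseteq> V"
  using path_in_V sources_in_V by blast

lemma hpath_into_iff: "(a, b) \<in> E \<Longrightarrow> HE a b \<Longrightarrow> hp z b \<longleftrightarrow> z = a \<or> hp z a"
  unfolding hpath_def by (rule trancl_into_iff_unique_pred) (use H_in_unique in auto)

lemma hpath_from_iff: "(a, b) \<in> E \<Longrightarrow> HE a b \<Longrightarrow> hp a z \<longleftrightarrow> z = b \<or> hp b z"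
  unfolding hpath_def by (rule trancl_from_iff_unique_succ) (use H_out_unique in auto)

lemma vpath_into_iff: "(a, b) \<in> E \<Longrightarrow> VE a b \<Longrightarrow> vp z b \<longleftrightarrow> z = a \<or> vp z a"
  unfolding vpath_def by (rule trancl_into_iff_unique_pred) (use V_in_unique in auto)

lemma vpath_from_iff: "(a, b) \<in> E \<Longrightarrow> VE a b \<Longrightarrow> vp a z \<longleftrightarrow> z = b \<or> vp b z"
  unfolding vpath_def by (rule trancl_from_iff_unique_succ) (use V_out_unique in auto)

lemma hpath_pos: "hp u v \<Longrightarrow> py u = py v \<and> px u < px v"
  unfolding hpath_def by (induction rule: trancl_induct) (auto simp: H_edge_def)

lemma vpath_pos: "vp u v \<Longrightarrow> px u = px v \<and> py v < py u"
  unfolding vpath_def by (induction rule: trancl_induct) (auto simp: V_edge_def)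

lemma hpath_irrefl: "\<not> hp u u"
  using hpath_pos[of u u] by auto

lemma vpath_irrefl: "\<not> vp u u"
  using vpath_pos[of u u] by auto

lemma hpath_asym: "hp u v \<Longrightarrow> \<not> hp v u"
  using hpath_pos[of u v] hpath_pos[of v u] by auto

lemma vpath_asym: "vp u v \<Longrightarrow> \<not> vp v u"
  using vpath_pos[of u v] vpath_pos[of v u] by auto

lemma hpath_not_vpath: "hp u v \<Longrightarrow> \<not> vp u v \<and> \<not> vp v u"
  using hpath_pos[of u v] vpath_pos[of u v] vpath_pos[of v u] by auto

lemma no_hpath_into_source: "h \<in> S \<Longrightarrow> \<not> hp z h"
  unfolding hpath_def by (auto elim: tranclE dest: no_edge_into_source)

lemma no_vpath_at_source:
  assumes "h \<in> S"
  shows "\<not> vp z h" "\<not> vp h z"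
proof -
  show "\<not> vp z h"
  proof
    assume "vp z h"
    then obtain y where "(y, h) \<in> E" unfolding vpath_def by (auto elim: tranclE)
    then show False using no_edge_into_source assms by blast
  qed
  show "\<not> vp h z"
  proof
    assume "vp h z"
    then obtain y where "(h, y) \<in> E" "VE h y" unfolding vpath_def by (auto elim: converse_tranclE)
    then show False using source_edge_H[of h y] assms not_H_and_V by blast
  qed
qed

lemma no_vpath_from_sink: "l \<in> K \<Longrightarrow> \<not> vp l z"
  unfolding vpath_def by (auto elim: converse_tranclE dest: no_edge_out_of_sink)

end

section \<open>Disjoint paths cannot cross\<close>

context se_graph begin

fun polyline :: "'v list \<Rightarrow> (real \<times> real) set" where
  "polyline [] = {}"
| "polyline [a] = {pos a}"
| "polyline (a # b # rest) = closed_segment (pos a) (pos b) \<union> polyline (b # rest)"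

lemma polyline_vertex: "z \<in> set R \<Longrightarrow> pos z \<in> polyline R"
  by (induction R rule: polyline.induct) auto

lemma connected_polyline: "R \<noteq> [] \<Longrightarrow> connected (polyline R)"
proof (induction R rule: polyline.induct)
  case (3 a b rest)
  have "pos b \<in> closed_segment (pos a) (pos b) \<inter> polyline (b # rest)"
    using polyline_vertex[of b "b # rest"] by auto
  then show ?case using "3.IH" by (auto intro!: connected_Un)
qed auto

lemma compact_polyline: "compact (polyline R)"
  by (induction R rule: polyline.induct) auto

lemma polyline_subset_convex: "convex C \<Longrightarrow> pos ` set R \<subseteq> C \<Longrightarrow> polyline R \<subseteq> C"
  by (induction R rule: polyline.induct) (auto dest: closed_segment_subset)

lemma polyline_point_cases:
  "is_path E R \<Longrightarrow> p \<in> polyline R \<Longrightarrow>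
     (\<exists>a b. (a, b) \<in> E \<and> a \<in> set R \<and> b \<in> set R \<and> p \<in> edge_seg pos (a, b)) \<or> (\<exists>a\<in>set R. p = pos a)"
proof (induction R rule: polyline.induct)
  case (3 a b rest)
  have ab: "(a, b) \<in> E" and br: "is_path E (b # rest)" using "3.prems" by (auto simp: is_path_Cons_Cons)
  show ?case
  proof (cases "p \<in> edge_seg pos (a, b)")
    case True
    then show ?thesis using ab by auto
  next
    case False
    then have "p \<in> polyline (b # rest)" using "3.prems" by (auto simp: edge_seg_def)
    then show ?thesis using "3.IH"[OF br] by auto
  qed
qed auto

lemma edge_seg_SE_bounds:
  assumes "(a, b) \<in> E" "p \<in> edge_seg pos (a, b)"
  shows "px a \<le> fst p \<and> fst p \<le> px b \<and> py b \<le> snd p \<and> snd p \<le> py a"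
proof -
  have "px a \<le> px b" "py b \<le> py a" using edge_H_or_V[OF assms(1)] by (auto simp: H_edge_def V_edge_def)
  then show ?thesis using closed_segment_SE_bounds assms(2) by (simp add: edge_seg_def)
qed

lemma polyline_SE_bounds:
  "is_path E R \<Longrightarrow> p \<in> polyline R \<Longrightarrow>
     px (hd R) \<le> fst p \<and> fst p \<le> px (last R) \<and> py (last R) \<le> snd p \<and> snd p \<le> py (hd R)"
proof (induction R arbitrary: p rule: polyline.induct)
  case (3 a b rest)
  have ab: "(a, b) \<in> E" and br: "is_path E (b # rest)" using "3.prems" by (auto simp: is_path_Cons_Cons)
  have b: "px b \<le> px (last (b # rest))" "py (last (b # rest)) \<le> py b"
    using "3.IH"[OF br polyline_vertex[of b]] by simp_all
  have "pos b \<in> edge_seg pos (a, b)" by (simp add: edge_seg_def)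
  note ab_bounds = edge_seg_SE_bounds[OF ab this]
  show ?case
  proof (cases "p \<in> edge_seg pos (a, b)")
    case True
    note p = edge_seg_SE_bounds[OF ab True]
    show ?thesis using p b by simp
  next
    case False
    then have "p \<in> polyline (b # rest)" using "3.prems" by (auto simp: edge_seg_def)
    note p = "3.IH"[OF br this]
    show ?thesis using p ab_bounds by simp
  qed
qed auto

lemma polyline_disjoint:
  assumes A: "is_path E A" "set A \<subseteq> V" and B: "is_path E B" "set B \<subseteq> V"
    and disj: "set A \<inter> set B = {}"
  shows "polyline A \<inter> polyline B = {}"
proof (rule ccontr)
  assume "polyline A \<inter> polyline B \<noteq> {}"
  then obtain p where pA: "p \<in> polyline A" and pB: "p \<in> polyline B" by blast
  have edge_vertex: False
    if "(a, b) \<in> E" "a \<in> set X" "b \<in> set X" "p \<in> edge_seg pos (a, b)" "w \<in> set Y" "p = pos w"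
      "set Y \<subseteq> V" "set X \<inter> set Y = {}" for a b w X Y
    using vertex_on_edge_seg[of w "(a, b)"] that by auto
  consider (EE) a b a' b' where "(a, b) \<in> E" "a \<in> set A" "b \<in> set A" "p \<in> edge_seg pos (a, b)"
      "(a', b') \<in> E" "a' \<in> set B" "b' \<in> set B" "p \<in> edge_seg pos (a', b')"
    | (EV) a b w where "(a, b) \<in> E" "a \<in> set A" "b \<in> set A" "p \<in> edge_seg pos (a, b)" "w \<in> set B" "p = pos w"
    | (VE) a' b' w where "(a', b') \<in> E" "a' \<in> set B" "b' \<in> set B" "p \<in> edge_seg pos (a', b')" "w \<in> set A" "p = pos w"
    | (VV) w w' where "w \<in> set A" "p = pos w" "w' \<in> set B" "p = pos w'"
    using polyline_point_cases[OF A(1) pA] polyline_point_cases[OF B(1) pB] by blast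
  then show False
  proof cases
    case EE
    then have "(a, b) \<noteq> (a', b')" using disj by auto
    then have "p \<in> pos ` ({a, b} \<inter> {a', b'})" using edge_segs_meet_at_ends[of "(a, b)" "(a', b')"] EE by auto
    then show False using EE disj by auto
  next
    case EV
    then show False using edge_vertex[of a b A w B] B(2) disj by blast
  next
    case VE
    then show False using edge_vertex[of a' b' B w A] A(2) disj by blast
  next
    case VV
    then have "w = w'" using A(2) B(2) inj_pos by (auto dest: inj_onD)
    then show False using VV disj by auto
  qed
qed

lemma order_convex_polyline: "is_path E R \<Longrightarrow> order_convex (polyline R)"
proof (induction R rule: polyline.induct)
  case (3 a b rest)
  have ab: "(a, b) \<in> E" and br: "is_path E (b # rest)" using "3.prems" by (auto simp: is_path_Cons_Cons)
  have "(snd (pos a) = snd (pos b) \<and> fst (pos a) \<le> fst (pos b)) \<or>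
      (fst (pos a) = fst (pos b) \<and> snd (pos b) \<le> snd (pos a))"
    using edge_H_or_V[OF ab] by (auto simp: H_edge_def V_edge_def)
  then have "order_convex (edge_seg pos (a, b))"
    unfolding edge_seg_def by (simp add: order_convex_axis_segment)
  moreover have "pos b \<in> edge_seg pos (a, b)" by (simp add: edge_seg_def)
  moreover have "fst u \<le> px b \<and> py b \<le> snd u" if "u \<in> edge_seg pos (a, b)" for u
    using edge_seg_SE_bounds[OF ab that] by simp
  moreover have "px b \<le> fst t \<and> snd t \<le> py b" if "t \<in> polyline (b # rest)" for t
    using polyline_SE_bounds[OF br that] by simp
  ultimately have "order_convex (edge_seg pos (a, b) \<union> polyline (b # rest))"
    using order_convex_Un[of "edge_seg pos (a, b)" "pos b" "polyline (b # rest)"]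
      "3.IH"[OF br] polyline_vertex[of b "b # rest"] by simp
  then show ?case by (simp add: edge_seg_def)
qed (auto simp: order_convex_def)

lemma polyline_comparable:
  "is_path E R \<Longrightarrow> R \<noteq> [] \<Longrightarrow> px (hd R) \<le> fst z \<Longrightarrow> py (last R) \<le> snd z \<Longrightarrow>
     z \<in> up_closure (polyline R) \<union> down_closure (polyline R)"
proof (induction R rule: polyline.induct)
  case (2 a)
  then have "pos a \<le> z" by (simp add: less_eq_prod_def)
  then show ?case by (auto simp: up_closure_def)
next
  case (3 a b rest)
  have ab: "(a, b) \<in> E" and br: "is_path E (b # rest)" using "3.prems" by (auto simp: is_path_Cons_Cons)
  show ?case
  proof (cases "px b \<le> fst z")
    case True
    then have "z \<in> up_closure (polyline (b # rest)) \<union> down_closure (polyline (b # rest))"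
      using "3.IH"[OF br] "3.prems"(4) by simp
    then show ?thesis by (auto simp: up_closure_def down_closure_def)
  next
    case False
    then have H: "HE a b" using edge_H_or_V[OF ab] "3.prems"(3) by (auto simp: V_edge_def)
    show ?thesis
    proof (cases "py a \<le> snd z")
      case True
      then have "pos a \<le> z" using "3.prems"(3) by (simp add: less_eq_prod_def)
      then show ?thesis by (auto simp: up_closure_def)
    next
      case below: False
      have "(fst z, py a) \<in> closed_segment (pos a) (pos b)"
        using H False "3.prems"(3) by (intro closed_segment_horizontalI) (auto simp: H_edge_def)
      moreover have "z \<le> (fst z, py a)" using below by (simp add: less_eq_prod_def)
      ultimately show ?thesis by (auto simp: down_closure_def)
    qed
  qed
qed simp

lemma vertex_NE_of_corner:
  assumes "w \<in> V"
  shows "(px (r 1), py (c 1)) \<le> pos w"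
proof -
  obtain xs where xs: "is_path E xs" "hd xs \<in> S" "last xs \<in> K" "w \<in> set xs"
    using vertex_on_full_path[OF assms] by blast
  obtain i where i: "i \<in> {1..m}" "hd xs = r i" using xs(2) by (auto simp: sources_def)
  obtain j where j: "j \<in> {1..n}" "last xs = c j" using xs(3) by (auto simp: sinks_def)
  have ne: "xs \<noteq> []" using xs(1) by (simp add: is_path_def)
  have "px (hd xs) \<le> px w"
  proof (cases "w = hd xs")
    case False
    then have "w \<in> set (tl xs)" using xs(4) ne by (metis hd_Cons_tl set_ConsD)
    then show ?thesis using path_SE[of "hd xs" "tl xs" w] xs(1) ne by simp
  qed simp
  moreover have "py (last xs) \<le> py w"
  proof (cases "w = last xs")
    case False
    obtain ys zs where split: "xs = ys @ w # zs" using xs(4) by (meson split_list)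
    then have "zs \<noteq> []" using False by auto
    then have "last xs \<in> set zs" using split by simp
    moreover have "is_path E (w # zs)" using xs(1) unfolding split by (rule is_path_appendD2)
    ultimately show ?thesis using path_SE by simp
  qed simp
  moreover have "1 \<in> {1..m}" "1 \<in> {1..n}" using i(1) j(1) by auto
  then have "px (r 1) = px (r i)" "py (c 1) = py (c j)"
    using sources_same_x i(1) sinks_same_y j(1) by blast+
  ultimately show ?thesis using i j by (simp add: less_eq_prod_def)
qed

text \<open>The staircase of \<open>B\<close> splits the quadrant containing the graph into the closed sets of
  points weakly above and weakly below it, which meet only on the staircase; the connected
  polyline of \<open>A\<close> avoids the staircase and so lies on one side.\<close>

lemma disjoint_path_no_crossing:
  assumes A: "is_path E A" "set A \<subseteq> V" and B: "is_path E B" "hd B \<in> S" "last B \<in> K"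
    and disj: "set A \<inter> set B = {}"
    and a1: "a1 \<in> set A" "pos a1 \<in> down_closure (polyline B)"
    and a2: "a2 \<in> set A" "pos a2 \<in> up_closure (polyline B)"
  shows False
proof -
  let ?U = "up_closure (polyline B)" and ?D = "down_closure (polyline B)"
  have "set B \<subseteq> V" using full_path_in_V[OF B(1,2)] .
  then have "polyline A \<inter> polyline B = {}" by (rule polyline_disjoint[OF A B(1) _ disj])
  moreover have "?U \<inter> ?D \<subseteq> polyline B"
    by (rule up_closure_Int_down_closure[OF order_convex_polyline[OF B(1)]])
  ultimately have separated: "?U \<inter> ?D \<inter> polyline A = {}" by blast
  have covered: "polyline A \<subseteq> ?U \<union> ?D"
  proof
    fix z assume z: "z \<in> polyline A"
    have "pos ` set A \<subseteq> {z. (px (r 1), py (c 1)) \<le> z}" using A(2) vertex_NE_of_corner by blast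
    then have "(px (r 1), py (c 1)) \<le> z" using polyline_subset_convex[OF convex_orthant] z by blast
    moreover obtain i j where "i \<in> {1..m}" "hd B = r i" "j \<in> {1..n}" "last B = c j"
      using B(2,3) by (auto simp: sources_def sinks_def)
    then have "px (hd B) = px (r 1)" "py (last B) = py (c 1)"
      using sources_same_x[of i 1] sinks_same_y[of j 1] by auto
    moreover have "B \<noteq> []" using B(1) by (simp add: is_path_def)
    ultimately show "z \<in> ?U \<union> ?D" using polyline_comparable[OF B(1)] by (simp add: less_eq_prod_def)
  qed
  have "connected (polyline A)" using a1(1) by (intro connected_polyline) auto
  moreover have "closed ?U" "closed ?D"
    using closed_up_closure closed_down_closure compact_polyline by blast+
  ultimately have "?U \<inter> polyline A = {} \<or> ?D \<inter> polyline A = {}"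
    using connected_closedD separated covered by blast
  moreover have "pos a2 \<in> ?U \<inter> polyline A" "pos a1 \<in> ?D \<inter> polyline A"
    using a1 a2 polyline_vertex by blast+
  ultimately show False by blast
qed

end

section \<open>Exchanging paths at a meeting vertex\<close>

definition swap_at_first_meet :: "'v list \<Rightarrow> 'v list \<Rightarrow> 'v list \<times> 'v list" where
  "swap_at_first_meet P Q = (let v = hd (dropWhile (\<lambda>z. z \<notin> set Q) P) in
     (takeWhile (\<lambda>z. z \<notin> set Q) P @ dropWhile (\<lambda>z. z \<noteq> v) Q,
      takeWhile (\<lambda>z. z \<noteq> v) Q @ dropWhile (\<lambda>z. z \<notin> set Q) P))"

definition swap_at_last_meet :: "'v list \<Rightarrow> 'v list \<Rightarrow> 'v list \<times> 'v list" where
  "swap_at_last_meet P Q = (let (A, B) = swap_at_first_meet (rev P) (rev Q) in (rev B, rev A))"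

lemma swap_at_first_meet_eq:
  assumes "set P1 \<inter> set (Q1 @ v # Q2) = {}" "v \<notin> set Q1"
  shows "swap_at_first_meet (P1 @ v # P2) (Q1 @ v # Q2) = (P1 @ v # Q2, Q1 @ v # P2)"
proof -
  let ?Q = "Q1 @ v # Q2"
  have "takeWhile (\<lambda>z. z \<notin> set ?Q) (P1 @ v # P2) = P1"
    "dropWhile (\<lambda>z. z \<notin> set ?Q) (P1 @ v # P2) = v # P2"
    using assms(1) by (subst takeWhile_append2 dropWhile_append2; auto)+
  moreover have "takeWhile (\<lambda>z. z \<noteq> v) ?Q = Q1" "dropWhile (\<lambda>z. z \<noteq> v) ?Q = v # Q2"
    using assms(2) by (subst takeWhile_append2 dropWhile_append2; auto)+
  ultimately show ?thesis unfolding swap_at_first_meet_def Let_def by simp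
qed

lemma swap_at_last_meet_eq:
  assumes "set P2 \<inter> set (Q1 @ v # Q2) = {}" "v \<notin> set Q2"
  shows "swap_at_last_meet (P1 @ v # P2) (Q1 @ v # Q2) = (P1 @ v # Q2, Q1 @ v # P2)"
proof -
  have "swap_at_first_meet (rev P2 @ v # rev P1) (rev Q2 @ v # rev Q1)
      = (rev P2 @ v # rev Q1, rev Q2 @ v # rev P1)"
    by (rule swap_at_first_meet_eq) (use assms in auto)
  then show ?thesis unfolding swap_at_last_meet_def by simp
qed

lemma swap_at_first_meet_split:
  assumes "distinct P" and "set P \<inter> set Q \<noteq> {}"
  obtains P1 v P2 Q1 Q2 where "P = P1 @ v # P2" "Q = Q1 @ v # Q2" "set P1 \<inter> set Q = {}"
    "swap_at_first_meet P Q = (P1 @ v # Q2, Q1 @ v # P2)"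
    "swap_at_first_meet (P1 @ v # Q2) (Q1 @ v # P2) = (P, Q)"
proof -
  obtain P1 v P2 where P: "P = P1 @ v # P2" "v \<in> set Q" "\<forall>y\<in>set P1. y \<notin> set Q"
    using split_list_first_prop[of P "\<lambda>x. x \<in> set Q"] assms(2) by blast
  obtain Q1 Q2 where Q: "Q = Q1 @ v # Q2" "v \<notin> set Q1" using split_list_first[OF P(2)] by blast
  have "v \<notin> set P1" "set P2 \<inter> set P1 = {}" using assms(1) P(1) by auto
  then show thesis
    using that[OF P(1) Q(1)] P Q swap_at_first_meet_eq[of P1 Q1 v Q2 P2]
      swap_at_first_meet_eq[of P1 Q1 v P2 Q2] by auto
qed

lemma swap_at_last_meet_split:
  assumes "distinct P" "distinct Q" and "set P \<inter> set Q \<noteq> {}"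
  obtains P1 v P2 Q1 Q2 where "P = P1 @ v # P2" "Q = Q1 @ v # Q2" "set P2 \<inter> set Q = {}"
    "swap_at_last_meet P Q = (P1 @ v # Q2, Q1 @ v # P2)"
    "swap_at_last_meet (P1 @ v # Q2) (Q1 @ v # P2) = (P, Q)"
proof -
  obtain P1 v P2 where P: "P = P1 @ v # P2" "v \<in> set Q" "\<forall>y\<in>set P2. y \<notin> set Q"
    using split_list_last_prop[of P "\<lambda>x. x \<in> set Q"] assms(3) by blast
  obtain Q1 Q2 where Q: "Q = Q1 @ v # Q2" "v \<notin> set Q2" using split_list_last[OF P(2)] by blast
  have "v \<notin> set P2" "set Q2 \<inter> set Q1 = {}" using assms(1,2) P(1) Q(1) by auto
  then show thesis
    using that[OF P(1) Q(1)] P Q swap_at_last_meet_eq[of P2 Q1 v Q2 P1]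
      swap_at_last_meet_eq[of Q2 Q1 v P2 P1] by auto
qed

context se_graph begin

definition paths :: "'v \<Rightarrow> 'v \<Rightarrow> 'v list set" where
  "paths a b = {xs. is_path E xs \<and> hd xs = a \<and> last xs = b}"

definition meeting_pairs :: "nat \<Rightarrow> nat \<Rightarrow> nat \<Rightarrow> nat \<Rightarrow> ('v list \<times> 'v list) set" where
  "meeting_pairs a b a' b' =
     {(P, Q) \<in> paths (r a) (c b) \<times> paths (r a') (c b'). set P \<inter> set Q \<noteq> {}}"

lemma paths_exchange:
  assumes "P1 @ v # P2 \<in> paths a1 b1" "Q1 @ v # Q2 \<in> paths a2 b2"
  shows "P1 @ v # Q2 \<in> paths a1 b2"
proof -
  have "is_path E (P1 @ [v])" "is_path E (v # Q2)"
    using assms is_path_appendD1 is_path_appendD2 by (auto simp: paths_def)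
  then have "is_path E (P1 @ v # Q2)" by (rule is_path_appendI)
  moreover have "hd (P1 @ v # Q2) = hd (P1 @ v # P2)" "last (P1 @ v # Q2) = last (Q1 @ v # Q2)"
    by (cases P1; simp) (cases Q2; simp)
  ultimately show ?thesis using assms by (simp add: paths_def)
qed

lemma full_paths:
  assumes "P \<in> paths (r a) (c b)" "a \<in> {1..m}" "b \<in> {1..n}"
  shows "is_path E P" "hd P = r a" "last P = c b" "hd P \<in> S" "last P \<in> K" "set P \<subseteq> V"
    "distinct P" "P \<noteq> []"
proof -
  show p: "is_path E P" "hd P = r a" "last P = c b" using assms by (auto simp: paths_def)
  show h: "hd P \<in> S" "last P \<in> K" using p assms by (auto simp: sources_def sinks_def)
  show "set P \<subseteq> V" using full_path_in_V[OF p(1) h(1)] .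
  show "distinct P" using path_distinct[OF p(1)] .
  show "P \<noteq> []" using p(1) by (simp add: is_path_def)
qed

lemma finite_paths: "finite (paths a b)"
proof -
  have "paths a b \<subseteq> {xs. set xs \<subseteq> V \<and> distinct xs} \<union> {[a]}"
  proof
    fix xs assume xs: "xs \<in> paths a b"
    then have p: "is_path E xs" by (simp add: paths_def)
    show "xs \<in> {xs. set xs \<subseteq> V \<and> distinct xs} \<union> {[a]}"
    proof (cases xs rule: remdups_adj.cases)
      case (3 x y ys)
      then have "(x, y) \<in> E" using p by (simp add: is_path_Cons_Cons)
      then have "x \<in> V" using edge_in_V by blast
      then show ?thesis using path_in_V[OF p] path_distinct[OF p] 3 by simp
    qed (use xs p in \<open>auto simp: paths_def is_path_def\<close>)
  qed
  then show ?thesis by (rule finite_subset) (simp add: finite_subset_distinct[OF finite_V])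
qed

lemma meeting_pairs_eq_Times:
  assumes "\<And>P Q. P \<in> paths (r a) (c b) \<Longrightarrow> Q \<in> paths (r a') (c b') \<Longrightarrow> set P \<inter> set Q \<noteq> {}"
  shows "meeting_pairs a b a' b' = paths (r a) (c b) \<times> paths (r a') (c b')"
  using assms by (auto simp: meeting_pairs_def)

lemma swap_at_last_meet_meeting_pairs:
  assumes "t \<in> meeting_pairs a b a' b'"
  shows "case_prod swap_at_last_meet t \<in> meeting_pairs a b' a' b"
    "case_prod swap_at_last_meet (case_prod swap_at_last_meet t) = t"
proof -
  obtain P Q where t: "t = (P, Q)" by fastforce
  have "distinct P" "distinct Q" "set P \<inter> set Q \<noteq> {}"
    using assms path_distinct by (auto simp: meeting_pairs_def paths_def t)
  then obtain P1 v P2 Q1 Q2 where d: "P = P1 @ v # P2" "Q = Q1 @ v # Q2"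
      "swap_at_last_meet P Q = (P1 @ v # Q2, Q1 @ v # P2)"
      "swap_at_last_meet (P1 @ v # Q2) (Q1 @ v # P2) = (P, Q)"
    by (rule swap_at_last_meet_split)
  then show "case_prod swap_at_last_meet t \<in> meeting_pairs a b' a' b"
    using assms paths_exchange[of P1 v P2 _ _ Q1 Q2] paths_exchange[of Q1 v Q2 _ _ P1 P2]
    by (auto simp: meeting_pairs_def t)
  show "case_prod swap_at_last_meet (case_prod swap_at_last_meet t) = t" using d by (simp add: t)
qed

lemma swap_at_first_meet_meeting_pairs:
  assumes "t \<in> meeting_pairs a b a' b'"
  shows "case_prod swap_at_first_meet t \<in> meeting_pairs a b' a' b"
    "case_prod swap_at_first_meet (case_prod swap_at_first_meet t) = t"
proof -
  obtain P Q where t: "t = (P, Q)" by fastforce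
  have "distinct P" "set P \<inter> set Q \<noteq> {}"
    using assms path_distinct by (auto simp: meeting_pairs_def paths_def t)
  then obtain P1 v P2 Q1 Q2 where d: "P = P1 @ v # P2" "Q = Q1 @ v # Q2"
      "swap_at_first_meet P Q = (P1 @ v # Q2, Q1 @ v # P2)"
      "swap_at_first_meet (P1 @ v # Q2) (Q1 @ v # P2) = (P, Q)"
    by (rule swap_at_first_meet_split)
  then show "case_prod swap_at_first_meet t \<in> meeting_pairs a b' a' b"
    using assms paths_exchange[of P1 v P2 _ _ Q1 Q2] paths_exchange[of Q1 v Q2 _ _ P1 P2]
    by (auto simp: meeting_pairs_def t)
  show "case_prod swap_at_first_meet (case_prod swap_at_first_meet t) = t" using d by (simp add: t)
qed

lemma leaving_edge_not_H:
  assumes P2: "is_path E (v # P2)" "P2 \<noteq> []" "set P2 \<subseteq> V"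
    and Q: "is_path E Q" "hd Q \<in> S" "last Q \<in> K" "v \<in> set Q"
    and disj: "set P2 \<inter> set Q = {}" and below: "pos (last P2) \<le> pos (last Q)"
  shows "\<not> HE v (hd P2)"
proof
  assume H: "HE v (hd P2)"
  have "is_path E P2" using P2(1,2) by (cases P2) (simp_all add: is_path_Cons_Cons)
  moreover have "pos (last P2) \<in> down_closure (polyline Q)"
    using below polyline_vertex[of "last Q" Q] Q(1) by (auto simp: down_closure_def is_path_def)
  moreover have "pos v \<le> pos (hd P2)" using H by (simp add: H_edge_def less_eq_prod_def)
  then have "pos (hd P2) \<in> up_closure (polyline Q)"
    using polyline_vertex[OF Q(4)] by (auto simp: up_closure_def)
  ultimately show False
    using disjoint_path_no_crossing[OF _ P2(3) Q(1-3) disj last_in_set _ hd_in_set] P2(2) by blast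
qed

lemma entering_edge_not_V:
  assumes P1: "is_path E (P1 @ [v])" "P1 \<noteq> []" "set P1 \<subseteq> V"
    and Q: "is_path E Q" "hd Q \<in> S" "last Q \<in> K" "v \<in> set Q"
    and disj: "set P1 \<inter> set Q = {}" and below: "pos (hd P1) \<le> pos (hd Q)"
  shows "\<not> VE (last P1) v"
proof
  assume V: "VE (last P1) v"
  have "is_path E P1" by (rule is_path_butlast[OF P1(1,2)])
  moreover have "pos (hd P1) \<in> down_closure (polyline Q)"
    using below polyline_vertex[of "hd Q" Q] Q(1) by (auto simp: down_closure_def is_path_def)
  moreover have "pos (last P1) \<in> up_closure (polyline Q)"
    using V polyline_vertex[OF Q(4)] by (auto simp: up_closure_def V_edge_def less_eq_prod_def)
  ultimately show False
    using disjoint_path_no_crossing[OF _ P1(3) Q(1-3) disj hd_in_set _ last_in_set] P1(2) by blast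
qed

lemma crossing_paths_meet:
  assumes P: "P \<in> paths (r i) (c k)" and Q: "Q \<in> paths (r l) (c j)"
    and idx: "i \<in> {1..m}" "l \<in> {1..m}" "j \<in> {1..n}" "k \<in> {1..n}" and "i < l" "j < k"
  shows "set P \<inter> set Q \<noteq> {}"
proof
  assume disj: "set P \<inter> set Q = {}"
  note P' = full_paths[OF P idx(1,4)] and Q' = full_paths[OF Q idx(2,3)]
  have "pos (hd P) \<le> pos (hd Q)"
    using P'(2) Q'(2) sources_same_x[OF idx(1,2)] sources_y_less[OF idx(1,2) \<open>i < l\<close>]
    by (simp add: less_eq_prod_def)
  then have "pos (hd P) \<in> down_closure (polyline Q)"
    using polyline_vertex[OF hd_in_set[OF Q'(8)]] by (auto simp: down_closure_def)
  moreover have "pos (last Q) \<le> pos (last P)"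
    using P'(3) Q'(3) sinks_same_y[OF idx(3,4)] sinks_x_less[OF idx(3,4) \<open>j < k\<close>]
    by (simp add: less_eq_prod_def)
  then have "pos (last P) \<in> up_closure (polyline Q)"
    using polyline_vertex[OF last_in_set[OF Q'(8)]] by (auto simp: up_closure_def)
  ultimately show False
    using disjoint_path_no_crossing[OF P'(1,6) Q'(1,4,5) disj hd_in_set _ last_in_set] P'(8) by blast
qed

end

section \<open>Exponents of \<open>q\<close> between path weights\<close>

definition letter_sign :: "bool \<Rightarrow> int" where
  "letter_sign b = (if b then 1 else -1)"

context se_graph begin

text \<open>A path weight is a word in letters \<open>(v, True)\<close>, standing for \<open>x v\<close>, and \<open>(v, False)\<close>,
  standing for its inverse \<open>xi v\<close>. Two generators satisfy \<open>x z x y = q\<^bsup>qexp z y\<^esup> x y x z\<close>, so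
  \<open>path_qexp R1 R2\<close> is the exponent of \<open>q\<close> in the commutation rule of the weights of \<open>R1\<close>
  and \<open>R2\<close>.\<close>

definition qexp_H :: "'v \<Rightarrow> 'v \<Rightarrow> int" where
  "qexp_H z y = (if hp z y then 1 else 0) - (if hp y z then 1 else 0)"

definition qexp_V :: "'v \<Rightarrow> 'v \<Rightarrow> int" where
  "qexp_V z y = (if vp y z then 1 else 0) - (if vp z y then 1 else 0)"

definition qexp :: "'v \<Rightarrow> 'v \<Rightarrow> int" where
  "qexp z y = qexp_H z y + qexp_V z y"

fun weight_word :: "'v list \<Rightarrow> ('v \<times> bool) list" where
  "weight_word (a # b # rest) =
     (if a \<in> S then [(b, True)] else if HE a b then [(a, False), (b, True)] else [])
     @ weight_word (b # rest)"
| "weight_word _ = []"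

definition letter_sum :: "'v list \<Rightarrow> ('v \<Rightarrow> int) \<Rightarrow> int" where
  "letter_sum R g = (\<Sum>\<alpha>\<leftarrow>weight_word R. letter_sign (snd \<alpha>) * g (fst \<alpha>))"

definition path_qexp :: "'v list \<Rightarrow> 'v list \<Rightarrow> int" where
  "path_qexp R1 R2 = (\<Sum>\<alpha>\<leftarrow>weight_word R1. \<Sum>\<beta>\<leftarrow>weight_word R2.
     letter_sign (snd \<alpha>) * letter_sign (snd \<beta>) * qexp (fst \<alpha>) (fst \<beta>))"

fun H_incr :: "('v \<Rightarrow> int) \<Rightarrow> 'v list \<Rightarrow> int" where
  "H_incr g (a # b # rest) = (if HE a b then g b - g a else 0) + H_incr g (b # rest)"
| "H_incr g _ = 0"

fun V_incr :: "('v \<Rightarrow> int) \<Rightarrow> 'v list \<Rightarrow> int" where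
  "V_incr g (a # b # rest) = (if HE a b then 0 else g b - g a) + V_incr g (b # rest)"
| "V_incr g _ = 0"

fun H_deg :: "'v \<Rightarrow> 'v list \<Rightarrow> int" where
  "H_deg z (a # b # rest) =
     (if HE a b then (if z = a then 1 else 0) + (if z = b then 1 else 0) else 0) + H_deg z (b # rest)"
| "H_deg z _ = 0"

fun V_deg :: "'v \<Rightarrow> 'v list \<Rightarrow> int" where
  "V_deg z (a # b # rest) =
     (if HE a b then 0 else (if z = a then 1 else 0) + (if z = b then 1 else 0)) + V_deg z (b # rest)"
| "V_deg z _ = 0"

fun H_indeg :: "'v \<Rightarrow> 'v list \<Rightarrow> int" where
  "H_indeg z (a # b # rest) = (if HE a b \<and> z = b then 1 else 0) + H_indeg z (b # rest)"
| "H_indeg z _ = 0"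

fun H_outdeg :: "'v \<Rightarrow> 'v list \<Rightarrow> int" where
  "H_outdeg z (a # b # rest) = (if HE a b \<and> z = a then 1 else 0) + H_outdeg z (b # rest)"
| "H_outdeg z _ = 0"

definition from_source :: "'v list \<Rightarrow> int" where
  "from_source R = (if hd R \<in> S \<and> 2 \<le> length R then 1 else 0)"

lemma path_qexp_letter_sum: "path_qexp R1 R2 = letter_sum R1 (\<lambda>z. letter_sum R2 (\<lambda>y. qexp z y))"
  unfolding path_qexp_def letter_sum_def by (simp add: mult.assoc sum_list_const_mult)

lemma letter_sum_Cons_Cons: "letter_sum (a # b # rest) g =
   (if a \<in> S then g b else if HE a b then g b - g a else 0) + letter_sum (b # rest) g"
  unfolding letter_sum_def by (simp add: letter_sign_def)

lemma letter_sum_eq_H_incr: "is_path E R \<Longrightarrow> letter_sum R g = H_incr g R + from_source R * g (hd R)"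
proof (induction R rule: induct_list012)
  case 1 then show ?case by (simp add: letter_sum_def from_source_def)
next
  case (2 x) then show ?case by (simp add: letter_sum_def from_source_def)
next
  case (3 a b rest)
  have ab: "(a, b) \<in> E" and p: "is_path E (b # rest)" using "3.prems" by (auto simp: is_path_Cons_Cons)
  have bS: "b \<notin> S" using no_edge_into_source[OF ab] .
  have IH: "letter_sum (b # rest) g = H_incr g (b # rest)" using "3.IH"(2)[OF p] bS by (simp add: from_source_def)
  show ?case
  proof (cases "a \<in> S")
    case True
    then have "HE a b" using source_edge_H ab by blast
    then show ?thesis using True IH by (simp add: letter_sum_Cons_Cons from_source_def)
  next
    case False
    then show ?thesis using IH by (simp add: letter_sum_Cons_Cons from_source_def)
  qed
qed

lemma H_incr_add_V_incr: "R \<noteq> [] \<Longrightarrow> H_incr g R + V_incr g R = g (last R) - g (hd R)"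
  by (induction R rule: induct_list012) auto

lemma H_incr_add: "H_incr (\<lambda>z. f z + g z) R = H_incr f R + H_incr g R"
  by (induction R rule: induct_list012) auto
lemma H_incr_diff: "H_incr (\<lambda>z. f z - g z) R = H_incr f R - H_incr g R"
  by (induction R rule: induct_list012) auto
lemma H_incr_cmult: "H_incr (\<lambda>z. k * f z) R = k * H_incr f R"
  by (induction R rule: induct_list012) (auto simp: algebra_simps)

lemma V_incr_uminus: "V_incr (\<lambda>z. - f z) R = - V_incr f R"
  by (induction R rule: induct_list012) auto

lemma H_incr_qexp_H: "is_path E R \<Longrightarrow> H_incr (\<lambda>y. qexp_H z y) R = H_deg z R"
proof (induction R rule: induct_list012)
  case (3 a b rest)
  have ab: "(a, b) \<in> E" and p: "is_path E (b # rest)" using "3.prems" by (auto simp: is_path_Cons_Cons)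
  have step: "(if HE a b then qexp_H z b - qexp_H z a else 0) =
      (if HE a b then (if z = a then 1 else 0) + (if z = b then 1 else 0) else 0)"
  proof (cases "HE a b")
    case True
    have i: "hp z b = (z = a \<or> hp z a)" using hpath_into_iff[OF ab True] .
    have o: "hp a z = (z = b \<or> hp b z)" using hpath_from_iff[OF ab True] .
    have ab': "a \<noteq> b" using True by (auto simp: H_edge_def)
    show ?thesis using True i o ab' hpath_irrefl[of a] hpath_irrefl[of b] unfolding qexp_H_def by auto
  qed simp
  show ?case using step "3.IH"(2)[OF p] by simp
qed auto

lemma V_incr_qexp_V: "is_path E R \<Longrightarrow> V_incr (\<lambda>y. qexp_V z y) R = - V_deg z R"
proof (induction R rule: induct_list012)
  case (3 a b rest)
  have ab: "(a, b) \<in> E" and p: "is_path E (b # rest)" using "3.prems" by (auto simp: is_path_Cons_Cons)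
  have step: "(if HE a b then 0 else qexp_V z b - qexp_V z a) =
      - (if HE a b then 0 else (if z = a then 1 else 0) + (if z = b then 1 else 0))"
  proof (cases "HE a b")
    case False
    then have V: "VE a b" using edge_V_iff_not_H[OF ab] by simp
    have i: "vp z b = (z = a \<or> vp z a)" using vpath_into_iff[OF ab V] .
    have o: "vp a z = (z = b \<or> vp b z)" using vpath_from_iff[OF ab V] .
    have ab': "a \<noteq> b" using V by (auto simp: V_edge_def)
    show ?thesis using False i o ab' vpath_irrefl[of a] vpath_irrefl[of b] unfolding qexp_V_def by auto
  qed simp
  show ?case using step "3.IH"(2)[OF p] by simp
qed auto

lemma H_incr_qexp_source: "is_path E R \<Longrightarrow> h \<in> S \<Longrightarrow> H_incr (\<lambda>z. qexp z h) R = - H_outdeg h R"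
proof (induction R rule: induct_list012)
  case (3 a b rest)
  have ab: "(a, b) \<in> E" and p: "is_path E (b # rest)" using "3.prems" by (auto simp: is_path_Cons_Cons)
  have sz: "\<And>z. qexp z h = - (if hp h z then 1 else 0)"
    using no_hpath_into_source[OF "3.prems"(2)] no_vpath_at_source[OF "3.prems"(2)] by (simp add: qexp_def qexp_H_def qexp_V_def)
  have step: "(if HE a b then qexp b h - qexp a h else 0) = - (if HE a b \<and> h = a then 1 else 0)"
  proof (cases "HE a b")
    case True
    have i: "hp h b = (h = a \<or> hp h a)" using hpath_into_iff[OF ab True] .
    show ?thesis using True i hpath_irrefl[of a] sz by auto
  qed simp
  show ?case using step "3.IH"(2)[OF p "3.prems"(2)] by simp
qed auto

lemma letter_sum_qexp: "is_path E R \<Longrightarrow> letter_sum R (\<lambda>y. qexp z y)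
   = H_deg z R + V_deg z R + qexp_V z (last R) - qexp_V z (hd R) + from_source R * qexp z (hd R)"
proof -
  assume p: "is_path E R"
  then have ne: "R \<noteq> []" by (simp add: is_path_def)
  have "H_incr (\<lambda>y. qexp z y) R = H_incr (\<lambda>y. qexp_H z y) R + H_incr (\<lambda>y. qexp_V z y) R"
    unfolding qexp_def by (rule H_incr_add)
  also have "H_incr (\<lambda>y. qexp_V z y) R = qexp_V z (last R) - qexp_V z (hd R) - V_incr (\<lambda>y. qexp_V z y) R"
    using H_incr_add_V_incr[OF ne, of "\<lambda>y. qexp_V z y"] by simp
  finally show ?thesis using letter_sum_eq_H_incr[OF p] H_incr_qexp_H[OF p] V_incr_qexp_V[OF p] by simp
qed

lemma H_incr_qexp_V_left:
  assumes "is_path E R"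
  shows "H_incr (\<lambda>z. qexp_V z l) R = qexp_V (last R) l - qexp_V (hd R) l - V_deg l R"
proof -
  have "(\<lambda>z. qexp_V z l) = (\<lambda>z. - qexp_V l z)" by (auto simp: qexp_V_def)
  then have "V_incr (\<lambda>z. qexp_V z l) R = V_deg l R"
    using V_incr_qexp_V[OF assms, of l] V_incr_uminus[of "qexp_V l" R] by simp
  then show ?thesis using H_incr_add_V_incr[of R "\<lambda>z. qexp_V z l"] assms by (simp add: is_path_def)
qed

lemma path_qexp_formula:
  assumes p1: "is_path E R1" and p2: "is_path E R2"
  shows "path_qexp R1 R2 = H_incr (\<lambda>z. H_deg z R2 + V_deg z R2) R1
     + (qexp_V (last R1) (last R2) - qexp_V (hd R1) (last R2) - V_deg (last R2) R1)
     - (qexp_V (last R1) (hd R2) - qexp_V (hd R1) (hd R2) - V_deg (hd R2) R1)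
     + from_source R2 * H_incr (\<lambda>z. qexp z (hd R2)) R1
     + from_source R1 * letter_sum R2 (\<lambda>y. qexp (hd R1) y)"
proof -
  define F where "F z = letter_sum R2 (\<lambda>y. qexp z y)" for z
  have F: "F = (\<lambda>z. (H_deg z R2 + V_deg z R2) + qexp_V z (last R2) - qexp_V z (hd R2) + from_source R2 * qexp z (hd R2))"
    unfolding F_def using letter_sum_qexp[OF p2] by (auto simp: algebra_simps)
  have "path_qexp R1 R2 = H_incr F R1 + from_source R1 * F (hd R1)"
    unfolding path_qexp_letter_sum F_def[symmetric] using letter_sum_eq_H_incr[OF p1] by simp
  also have "H_incr F R1 = H_incr (\<lambda>z. H_deg z R2 + V_deg z R2) R1 + H_incr (\<lambda>z. qexp_V z (last R2)) R1
      - H_incr (\<lambda>z. qexp_V z (hd R2)) R1 + from_source R2 * H_incr (\<lambda>z. qexp z (hd R2)) R1"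
    unfolding F by (simp add: H_incr_add H_incr_diff H_incr_cmult)
  finally show ?thesis using H_incr_qexp_V_left[OF p1] unfolding F_def by simp
qed

lemma H_incr_local:
  assumes "\<forall>z\<in>set R. z \<noteq> v \<longrightarrow> f z = 0"
  shows "H_incr f R = (H_indeg v R - H_outdeg v R) * f v"
  using assms
proof (induction R rule: induct_list012)
  case (3 a b rest)
  then have IH: "H_incr f (b # rest) = (H_indeg v (b # rest) - H_outdeg v (b # rest)) * f v" by simp
  have "(if HE a b then f b - f a else 0) =
        ((if HE a b \<and> v = b then 1 else 0) - (if HE a b \<and> v = a then 1 else 0)) * f v"
    using "3.prems" by auto
  then show ?case using IH by (simp add: algebra_simps)
qed auto

lemma degrees_notin:
  "z \<notin> set R \<Longrightarrow> H_deg z R = 0 \<and> V_deg z R = 0 \<and> H_indeg z R = 0 \<and> H_outdeg z R = 0"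
  by (induction R rule: induct_list012) auto

lemma degrees_Cons_Cons:
  "v \<notin> set (b # rest) \<Longrightarrow>
     H_deg v (v # b # rest) = (if HE v b then 1 else 0) \<and>
     V_deg v (v # b # rest) = (if HE v b then 0 else 1) \<and>
     H_indeg v (v # b # rest) = 0 \<and> H_outdeg v (v # b # rest) = (if HE v b then 1 else 0)"
  using degrees_notin[of v "b # rest"] by auto

lemma degrees_snoc_snoc:
  "H_deg z (xs @ [a, b]) = H_deg z (xs @ [a]) + (if HE a b then (if z = a then 1 else 0) + (if z = b then 1 else 0) else 0) \<and>
   V_deg z (xs @ [a, b]) = V_deg z (xs @ [a]) + (if HE a b then 0 else (if z = a then 1 else 0) + (if z = b then 1 else 0)) \<and>
   H_indeg z (xs @ [a, b]) = H_indeg z (xs @ [a]) + (if HE a b \<and> z = b then 1 else 0) \<and>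
   H_outdeg z (xs @ [a, b]) = H_outdeg z (xs @ [a]) + (if HE a b \<and> z = a then 1 else 0)"
  by (induction xs rule: induct_list012) auto

lemma degrees_snoc_snoc_end:
  "v \<notin> set (xs @ [a]) \<Longrightarrow>
     H_deg v (xs @ [a, v]) = (if HE a v then 1 else 0) \<and>
     V_deg v (xs @ [a, v]) = (if HE a v then 0 else 1) \<and>
     H_indeg v (xs @ [a, v]) = (if HE a v then 1 else 0) \<and> H_outdeg v (xs @ [a, v]) = 0"
  using degrees_notin[of v "xs @ [a]"] degrees_snoc_snoc[of v xs a v] by auto

lemma qexp_V_source_right: "h \<in> S \<Longrightarrow> qexp_V z h = 0" using no_vpath_at_source by (simp add: qexp_V_def)
lemma qexp_V_source_left: "h \<in> S \<Longrightarrow> qexp_V h z = 0" using no_vpath_at_source by (simp add: qexp_V_def)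
lemma qexp_V_refl: "qexp_V z z = 0" by (simp add: qexp_V_def)
lemma qexp_V_sink_left: "l \<in> K \<Longrightarrow> qexp_V l z = (if vp z l then 1 else 0)" using no_vpath_from_sink by (simp add: qexp_V_def)
lemma qexp_V_sink_right: "l \<in> K \<Longrightarrow> qexp_V z l = - (if vp z l then 1 else 0)" using no_vpath_from_sink by (simp add: qexp_V_def)
lemma qexp_sources: "h \<in> S \<Longrightarrow> h' \<in> S \<Longrightarrow> qexp h h' = 0"
  using no_hpath_into_source qexp_V_source_right by (simp add: qexp_def qexp_H_def)

lemma degrees_last:
  assumes p: "is_path E (C @ [v])" and C: "C \<noteq> []"
  shows "H_deg v (C @ [v]) + V_deg v (C @ [v]) = 1"
    and "H_indeg v (C @ [v]) = (if HE (last C) v then 1 else 0)"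
    and "H_outdeg v (C @ [v]) = 0" and "V_deg v (C @ [v]) = (if HE (last C) v then 0 else 1)"
proof -
  obtain C' a where Ca: "C = C' @ [a]" using C by (metis rev_exhaust)
  have "v \<notin> set C" using path_last_notin[OF p] .
  then have "v \<notin> set (C' @ [a])" using Ca by simp
  note cnt = degrees_snoc_snoc_end[OF this]
  show "H_deg v (C @ [v]) + V_deg v (C @ [v]) = 1" "H_indeg v (C @ [v]) = (if HE (last C) v then 1 else 0)"
       "H_outdeg v (C @ [v]) = 0" "V_deg v (C @ [v]) = (if HE (last C) v then 0 else 1)"
    using cnt Ca by auto
qed

lemma degrees_first:
  assumes p: "is_path E (v # B)" and B: "B \<noteq> []"
  shows "H_deg v (v # B) + V_deg v (v # B) = 1"
    and "H_indeg v (v # B) = 0" and "H_outdeg v (v # B) = (if HE v (hd B) then 1 else 0)"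
    and "V_deg v (v # B) = (if HE v (hd B) then 0 else 1)"
proof -
  obtain b rest where Bb: "B = b # rest" using B by (cases B) auto
  have "v \<notin> set B" using path_distinct[OF p] by simp
  note cnt = degrees_Cons_Cons[OF this[unfolded Bb]]
  show "H_deg v (v # B) + V_deg v (v # B) = 1" "H_indeg v (v # B) = 0"
       "H_outdeg v (v # B) = (if HE v (hd B) then 1 else 0)" "V_deg v (v # B) = (if HE v (hd B) then 0 else 1)"
    using cnt Bb by auto
qed

lemma H_incr_degrees_local:
  assumes "\<forall>z\<in>set R1. z \<noteq> v \<longrightarrow> z \<notin> set R2"
  shows "H_incr (\<lambda>z. H_deg z R2 + V_deg z R2) R1 = (H_indeg v R1 - H_outdeg v R1) * (H_deg v R2 + V_deg v R2)"
  by (rule H_incr_local) (use assms degrees_notin in auto)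

lemma path_qexp_from_to:
  assumes pB: "is_path E (v # B)" and B: "B \<noteq> []" and lB: "last B \<in> K"
    and pC: "is_path E (C @ [v])" and C: "C \<noteq> []" and hC: "hd C \<in> S"
    and disj: "set B \<inter> set C = {}"
  shows "path_qexp (v # B) (C @ [v]) = (if vp v (last B) then 1 else 0) - 1"
proof -
  have vB: "v \<notin> set B" using path_distinct[OF pB] by simp
  have vC: "v \<notin> set C" using path_last_notin[OF pC] .
  have vS: "v \<notin> S" using path_inner_not_source[of C v "[]"] pC C by simp
  have hdC: "hd (C @ [v]) = hd C" using C by simp
  have hCn: "hd C \<notin> set (v # B)" using disj vC C hd_in_set[OF C] by auto
  have c1: "from_source (v # B) = 0" using vS by (simp add: from_source_def)
  have c2: "from_source (C @ [v]) = 1" using hC C hdC by (cases C) (auto simp: from_source_def)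
  have loc: "H_incr (\<lambda>z. H_deg z (C @ [v]) + V_deg z (C @ [v])) (v # B)
      = (H_indeg v (v # B) - H_outdeg v (v # B)) * (H_deg v (C @ [v]) + V_deg v (C @ [v]))"
    by (rule H_incr_degrees_local) (use disj in auto)
  have lBv: "last B \<noteq> v" using vB B by auto
  have lastvB: "last (v # B) = last B" using B by simp
  have srcterm: "H_incr (\<lambda>z. qexp z (hd C)) (v # B) = 0"
    using H_incr_qexp_source[OF pB hC] degrees_notin[OF hCn] by simp
  have iv: "V_deg (hd C) (v # B) = 0" using degrees_notin[OF hCn] by simp
  show ?thesis
    unfolding path_qexp_formula[OF pB pC] hdC lastvB c1 c2 srcterm iv loc
    using degrees_first[OF pB B] degrees_last(1)[OF pC C] qexp_V_sink_left[OF lB] qexp_V_refl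
      qexp_V_source_right[OF hC] vpath_irrefl by (simp add: qexp_V_source_right[OF hC])
qed

lemma path_qexp_from_from:
  assumes pB: "is_path E (v # B)" and B: "B \<noteq> []" and lB: "last B \<in> K"
    and pD: "is_path E (v # D)" and D: "D \<noteq> []" and lD: "last D \<in> K"
    and vS: "v \<notin> S" and disj: "set B \<inter> set D = {}"
  shows "path_qexp (v # B) (v # D) = (if HE v (hd B) then -1 else 1) + (if vp v (last D) then 1 else 0)
                                 - (if vp v (last B) then 1 else 0)"
proof -
  have vB: "v \<notin> set B" using path_distinct[OF pB] by simp
  have c1: "from_source (v # B) = 0" "from_source (v # D) = 0" using vS by (auto simp: from_source_def)
  have loc: "H_incr (\<lambda>z. H_deg z (v # D) + V_deg z (v # D)) (v # B)
      = (H_indeg v (v # B) - H_outdeg v (v # B)) * (H_deg v (v # D) + V_deg v (v # D))"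
    by (rule H_incr_degrees_local) (use disj in auto)
  have lDn: "last D \<notin> set (v # B)"
    using disj last_in_set[OF D] path_distinct[OF pD] D by auto
  have iv: "V_deg (last D) (v # B) = 0" using degrees_notin[OF lDn] by simp
  have lastvB: "last (v # B) = last B" "last (v # D) = last D" using B D by auto
  have ss: "qexp_V (last B) (last D) = 0" using qexp_V_sink_left[OF lB] no_vpath_from_sink[OF lD] by simp
  show ?thesis
    unfolding path_qexp_formula[OF pB pD] lastvB c1 loc iv list.sel(1) ss
    using degrees_first[OF pB B] degrees_first(1)[OF pD D] qexp_V_sink_left[OF lB] qexp_V_sink_right[OF lD] qexp_V_refl
    by simp
qed

lemma path_qexp_to_to:
  assumes pC: "is_path E (C @ [v])" and C: "C \<noteq> []" and hC: "hd C \<in> S"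
    and pA: "is_path E (A @ [v])" and A: "A \<noteq> []" and hA: "hd A \<in> S"
    and disj: "set C \<inter> set A = {}"
  shows "path_qexp (C @ [v]) (A @ [v]) = (if HE (last C) v then 1 else -1)"
proof -
  have vC: "v \<notin> set C" using path_last_notin[OF pC] .
  have vA: "v \<notin> set A" using path_last_notin[OF pA] .
  have hdC: "hd (C @ [v]) = hd C" and hdA: "hd (A @ [v]) = hd A" using C A by auto
  have c1: "from_source (C @ [v]) = 1" using hC C hdC by (cases C) (auto simp: from_source_def)
  have c2: "from_source (A @ [v]) = 1" using hA A hdA by (cases A) (auto simp: from_source_def)
  have loc: "H_incr (\<lambda>z. H_deg z (A @ [v]) + V_deg z (A @ [v])) (C @ [v])
      = (H_indeg v (C @ [v]) - H_outdeg v (C @ [v])) * (H_deg v (A @ [v]) + V_deg v (A @ [v]))"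
    by (rule H_incr_degrees_local) (use disj in auto)
  have hAn: "hd A \<notin> set (C @ [v])" using disj vA hd_in_set[OF A] by auto
  have hCn: "hd C \<notin> set (A @ [v])" using disj vC hd_in_set[OF C] by auto
  have srcterm: "H_incr (\<lambda>z. qexp z (hd A)) (C @ [v]) = 0"
    using H_incr_qexp_source[OF pC hA] degrees_notin[OF hAn] by simp
  have iv: "V_deg (hd A) (C @ [v]) = 0" using degrees_notin[OF hAn] by simp
  have F: "letter_sum (A @ [v]) (\<lambda>y. qexp (hd C) y) = 0"
    using letter_sum_qexp[OF pA, of "hd C"] degrees_notin[OF hCn] hdA c2 qexp_V_source_left[OF hC] qexp_sources[OF hC hA]
    by simp
  show ?thesis
    unfolding path_qexp_formula[OF pC pA] hdC hdA c1 c2 srcterm iv loc F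
    using degrees_last[OF pC C] degrees_last(1)[OF pA A] qexp_V_refl qexp_V_source_right[OF hA] qexp_V_source_left[OF hC]
    by simp
qed

lemma path_qexp_disjoint:
  assumes pP: "is_path E P" and pQ: "is_path E Q" and hP: "hd P \<in> S" and hQ: "hd Q \<in> S"
    and lP: "last P \<in> K" and lQ: "last Q \<in> K" and disj: "set P \<inter> set Q = {}"
  shows "path_qexp P Q = 0"
proof -
  have Pne: "P \<noteq> []" using pP by (simp add: is_path_def)
  have Qne: "Q \<noteq> []" using pQ by (simp add: is_path_def)
  have loc: "H_incr (\<lambda>z. H_deg z Q + V_deg z Q) P = 0"
  proof -
    have "H_incr (\<lambda>z. H_deg z Q + V_deg z Q) P = (H_indeg (hd P) P - H_outdeg (hd P) P) * (H_deg (hd P) Q + V_deg (hd P) Q)"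
    proof (rule H_incr_local)
      have nz: "z \<in> set P \<Longrightarrow> H_deg z Q + V_deg z Q = 0" for z
      proof -
        assume "z \<in> set P"
        then have "z \<notin> set Q" using disj by auto
        then show ?thesis using degrees_notin[of z Q] by simp
      qed
      show "\<forall>z\<in>set P. z \<noteq> hd P \<longrightarrow> H_deg z Q + V_deg z Q = 0" using nz by blast
    qed
    moreover have "hd P \<notin> set Q" using disj hd_in_set[OF Pne] by auto
    ultimately show ?thesis using degrees_notin by simp
  qed
  have lQn: "last Q \<notin> set P" using disj last_in_set[OF Qne] by auto
  have hQn: "hd Q \<notin> set P" using disj hd_in_set[OF Qne] by auto
  have hPn: "hd P \<notin> set Q" using disj hd_in_set[OF Pne] by auto
  have t1: "H_incr (\<lambda>z. qexp z (hd Q)) P = 0" using H_incr_qexp_source[OF pP hQ] degrees_notin[OF hQn] by simp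
  have t2: "letter_sum Q (\<lambda>y. qexp (hd P) y) = 0"
    using letter_sum_qexp[OF pQ, of "hd P"] degrees_notin[OF hPn] qexp_V_source_left[OF hP] qexp_sources[OF hP hQ] by simp
  show ?thesis
    unfolding path_qexp_formula[OF pP pQ] loc t1 t2
    using qexp_V_sink_left[OF lP] no_vpath_from_sink[OF lQ] qexp_V_source_left[OF hP] qexp_V_source_right[OF hQ] degrees_notin[OF lQn]
      degrees_notin[OF hQn] by simp
qed

end

section \<open>Path weights \<open>q\<close>-commute\<close>

locale se_graph_algebra = se_graph V E pos m r n c + q_scalar \<phi> q
  for V :: "'v set" and E pos m r n c and \<phi> :: "'k::field \<Rightarrow> 'a::ring_1" and q +
  fixes x xi :: "'v \<Rightarrow> 'a"
  assumes inverses: "\<forall>w\<in>inner_vertices V m r n c. x w * xi w = 1 \<and> xi w * x w = 1"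
    and relations: "LG_relations V E pos m r n c (\<phi> q) x"
begin

definition letter_val :: "'v \<times> bool \<Rightarrow> 'a" where
  "letter_val L = (if snd L then x (fst L) else xi (fst L))"

abbreviation "wt R \<equiv> path_wt (edge_wt pos S x xi) R"

lemma wt_eq_prod_letters: "wt R = prod_list (map letter_val (weight_word R))"
proof (induction R rule: induct_list012)
  case (3 a b rest)
  then show ?case by (simp add: edge_wt_def letter_val_def)
qed auto

lemma weight_word_inner: "is_path E R \<Longrightarrow> \<alpha> \<in> set (weight_word R) \<Longrightarrow> fst \<alpha> \<in> W"
proof (induction R rule: induct_list012)
  case (3 a b rest)
  have ab: "(a, b) \<in> E" and p: "is_path E (b # rest)" using "3.prems" by (auto simp: is_path_Cons_Cons)
  show ?case
  proof (cases "\<alpha> \<in> set (weight_word (b # rest))")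
    case True then show ?thesis using "3.IH"(2)[OF p] by simp
  next
    case False
    then have "\<alpha> \<in> set (if a \<in> S then [(b, True)] else if HE a b then [(a, False), (b, True)] else [])"
      using "3.prems"(2) by simp
    then show ?thesis using H_edge_head_inner[OF ab] H_edge_tail_inner[OF ab] source_edge_H[OF ab]
      by (auto split: if_splits)
  qed
qed auto

lemma qexp_cases:
  "qexp u v = (if hp u v then 1 else if hp v u then -1 else if vp u v then -1 else if vp v u then 1 else 0)"
  using hpath_asym[of u v] hpath_not_vpath[of u v] hpath_not_vpath[of v u] vpath_asym[of u v]
  by (auto simp: qexp_def qexp_H_def qexp_V_def)

lemma x_q_commute:
  assumes u: "u \<in> W" and v: "v \<in> W"
  shows "x u * x v = qpow (qexp u v) * (x v * x u)"
proof (cases "u = v")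
  case True then show ?thesis by (simp add: qexp_def qexp_H_def qexp_V_def)
next
  case False
  have R: "hp u v \<longrightarrow> x u * x v = \<phi> q * (x v * x u)"
          "vp u v \<longrightarrow> x v * x u = \<phi> q * (x u * x v)"
          "\<not> hp u v \<and> \<not> hp v u \<and> \<not> vp u v \<and> \<not> vp v u \<longrightarrow> x u * x v = x v * x u"
          "hp v u \<longrightarrow> x v * x u = \<phi> q * (x u * x v)"
          "vp v u \<longrightarrow> x u * x v = \<phi> q * (x v * x u)"
    using relations u v False unfolding LG_relations_def by metis+
  have inv: "y = \<phi> q * z \<Longrightarrow> z = \<phi> (inverse q) * y" for y z
    by (simp add: mult.assoc[symmetric] phi_q_inverse(2))
  show ?thesis
    using R inv qpow_1 qpow_minus_1 hpath_asym[of u v] hpath_not_vpath[of u v]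
      hpath_not_vpath[of v u] vpath_asym[of u v]
    unfolding qexp_cases by auto
qed

lemma letter_val_q_commute:
  assumes u: "fst \<alpha> \<in> W" and v: "fst \<beta> \<in> W"
  shows "letter_val \<alpha> * letter_val \<beta> =
    qpow (letter_sign (snd \<alpha>) * letter_sign (snd \<beta>) * qexp (fst \<alpha>) (fst \<beta>)) * (letter_val \<beta> * letter_val \<alpha>)"
proof -
  obtain a e where A: "\<alpha> = (a, e)" by (cases \<alpha>)
  obtain b f where B: "\<beta> = (b, f)" by (cases \<beta>)
  have aW: "a \<in> W" and bW: "b \<in> W" using u v A B by auto
  have xx: "x a * x b = qpow (qexp a b) * (x b * x a)" by (rule x_q_commute[OF aW bW])
  have ua: "x a * xi a = 1" "xi a * x a = 1" and ub: "x b * xi b = 1" "xi b * x b = 1"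
    using inverses aW bW by auto
  have ix: "xi a * x b = qpow (- qexp a b) * (x b * xi a)" by (rule q_commute_inverse_left[OF xx ua])
  have xi': "x a * xi b = qpow (- qexp a b) * (xi b * x a)" by (rule q_commute_inverse_right[OF xx ub])
  have ii: "xi a * xi b = qpow (- (- qexp a b)) * (xi b * xi a)" by (rule q_commute_inverse_right[OF ix ub])
  show ?thesis using xx ix xi' ii unfolding A B letter_val_def letter_sign_def by auto
qed

lemma wt_q_commute:
  assumes p1: "is_path E R1" and p2: "is_path E R2"
  shows "wt R1 * wt R2 = qpow (path_qexp R1 R2) * (wt R2 * wt R1)"
  unfolding wt_eq_prod_letters path_qexp_def
  by (rule q_commute_prod_list)
    (use letter_val_q_commute weight_word_inner[OF p1] weight_word_inner[OF p2] in blast)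

lemma path_split_at:
  assumes p: "is_path E (P1 @ v # P2)"
  shows "is_path E (P1 @ [v])" "is_path E (v # P2)"
    "wt (P1 @ v # P2) = wt (P1 @ [v]) * wt (v # P2)"
  using is_path_appendD1[OF p] is_path_appendD2[OF p] path_wt_append by auto

lemma wt_exchange_tails:
  assumes pP: "is_path E (P1 @ v # P2)" and pQ: "is_path E (Q1 @ v # Q2)"
    and Q1: "Q1 \<noteq> []" and hQ: "hd Q1 \<in> S"
    and P2: "P2 \<noteq> []" and Q2: "Q2 \<noteq> []" and lP: "last P2 \<in> K" and lQ: "last Q2 \<in> K"
    and disj: "set P2 \<inter> set (Q1 @ v # Q2) = {}" and nH: "\<not> HE v (hd P2)"
  shows "wt (P1 @ v # P2) * wt (Q1 @ v # Q2) = \<phi> q * (wt (P1 @ v # Q2) * wt (Q1 @ v # P2))"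
proof -
  note A = path_split_at[OF pP] and C = path_split_at[OF pQ]
  have dQ: "set Q2 \<inter> set Q1 = {}" using path_distinct[OF pQ] by auto
  have vS: "v \<notin> S" using path_inner_not_source[OF pQ Q1] .
  have k1: "path_qexp (v # P2) (Q1 @ [v]) = (if vp v (last P2) then 1 else 0) - 1"
    by (rule path_qexp_from_to[OF A(2) P2 lP C(1) Q1 hQ]) (use disj in auto)
  have k2: "path_qexp (v # P2) (v # Q2) =
      1 + (if vp v (last Q2) then 1 else 0) - (if vp v (last P2) then 1 else 0)"
  proof -
    have d2: "set P2 \<inter> set Q2 = {}" using disj by auto
    show ?thesis using path_qexp_from_from[OF A(2) P2 lP C(2) Q2 lQ vS d2] nH by simp
  qed
  have k3: "path_qexp (v # Q2) (Q1 @ [v]) = (if vp v (last Q2) then 1 else 0) - 1"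
    by (rule path_qexp_from_to[OF C(2) Q2 lQ C(1) Q1 hQ dQ])
  have bc: "wt (v # P2) * wt (Q1 @ [v]) =
      qpow (path_qexp (v # P2) (Q1 @ [v])) * (wt (Q1 @ [v]) * wt (v # P2))"
    by (rule wt_q_commute[OF A(2) C(1)])
  have bd: "wt (v # P2) * wt (v # Q2) =
      qpow (path_qexp (v # P2) (v # Q2)) * (wt (v # Q2) * wt (v # P2))"
    by (rule wt_q_commute[OF A(2) C(2)])
  have dc: "wt (v # Q2) * wt (Q1 @ [v]) =
      qpow (path_qexp (v # Q2) (Q1 @ [v])) * (wt (Q1 @ [v]) * wt (v # Q2))"
    by (rule wt_q_commute[OF C(2) C(1)])
  have "path_qexp (v # P2) (Q1 @ [v]) + path_qexp (v # P2) (v # Q2) - path_qexp (v # Q2) (Q1 @ [v]) = 1"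
    unfolding k1 k2 k3 by simp
  then show ?thesis
    using q_commute_exchange_right[OF bc bd dc, of "wt (P1 @ [v])"] A(3) C(3) qpow_1
      path_wt_append[of "edge_wt pos S x xi" P1 v Q2] path_wt_append[of "edge_wt pos S x xi" Q1 v P2]
    by simp
qed

lemma wt_exchange_heads:
  assumes pP: "is_path E (P1 @ v # P2)" and pQ: "is_path E (Q1 @ v # Q2)"
    and P1: "P1 \<noteq> []" and Q1: "Q1 \<noteq> []" and hP: "hd P1 \<in> S" and hQ: "hd Q1 \<in> S"
    and Q2: "Q2 \<noteq> []" and lQ: "last Q2 \<in> K"
    and disj: "set P1 \<inter> set (Q1 @ v # Q2) = {}" and nH: "\<not> HE (last Q1) v"
  shows "wt (Q1 @ v # Q2) * wt (P1 @ v # P2) =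
    \<phi> (inverse q) * (wt (P1 @ v # Q2) * wt (Q1 @ v # P2))"
proof -
  note A = path_split_at[OF pP] and C = path_split_at[OF pQ]
  have dQ: "set Q2 \<inter> set Q1 = {}" using path_distinct[OF pQ] by auto
  have k1: "path_qexp (Q1 @ [v]) (P1 @ [v]) = -1"
    using path_qexp_to_to[OF C(1) Q1 hQ A(1) P1 hP] disj nH by auto
  have k2: "path_qexp (v # Q2) (P1 @ [v]) = (if vp v (last Q2) then 1 else 0) - 1"
    by (rule path_qexp_from_to[OF C(2) Q2 lQ A(1) P1 hP]) (use disj in auto)
  have k3: "path_qexp (v # Q2) (Q1 @ [v]) = (if vp v (last Q2) then 1 else 0) - 1"
    by (rule path_qexp_from_to[OF C(2) Q2 lQ C(1) Q1 hQ dQ])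
  have ca: "wt (Q1 @ [v]) * wt (P1 @ [v]) =
      qpow (path_qexp (Q1 @ [v]) (P1 @ [v])) * (wt (P1 @ [v]) * wt (Q1 @ [v]))"
    by (rule wt_q_commute[OF C(1) A(1)])
  have da: "wt (v # Q2) * wt (P1 @ [v]) =
      qpow (path_qexp (v # Q2) (P1 @ [v])) * (wt (P1 @ [v]) * wt (v # Q2))"
    by (rule wt_q_commute[OF C(2) A(1)])
  have dc: "wt (v # Q2) * wt (Q1 @ [v]) =
      qpow (path_qexp (v # Q2) (Q1 @ [v])) * (wt (Q1 @ [v]) * wt (v # Q2))"
    by (rule wt_q_commute[OF C(2) C(1)])
  have "path_qexp (Q1 @ [v]) (P1 @ [v]) + path_qexp (v # Q2) (P1 @ [v]) - path_qexp (v # Q2) (Q1 @ [v]) = -1"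
    unfolding k1 k2 k3 by simp
  then show ?thesis
    using q_commute_exchange_left[OF ca da dc, of "wt (v # P2)"] A(3) C(3) qpow_minus_1
      path_wt_append[of "edge_wt pos S x xi" P1 v Q2] path_wt_append[of "edge_wt pos S x xi" Q1 v P2]
    by simp
qed

lemma wt_swap_at_last_meet:
  assumes P: "P \<in> paths (r a) (c b)" and Q: "Q \<in> paths (r a') (c b')"
    and idx: "a \<in> {1..m}" "a' \<in> {1..m}" "b \<in> {1..n}" "b' \<in> {1..n}" and "b < b'"
    and meet: "set P \<inter> set Q \<noteq> {}"
  shows "wt P * wt Q = \<phi> q * (wt (fst (swap_at_last_meet P Q)) * wt (snd (swap_at_last_meet P Q)))"
proof -
  note P' = full_paths[OF P idx(1,3)] and Q' = full_paths[OF Q idx(2,4)]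
  obtain P1 v P2 Q1 Q2 where d: "P = P1 @ v # P2" "Q = Q1 @ v # Q2" "set P2 \<inter> set Q = {}"
      "swap_at_last_meet P Q = (P1 @ v # Q2, Q1 @ v # P2)"
    by (rule swap_at_last_meet_split[OF P'(7) Q'(7) meet])
  have pP: "is_path E (P1 @ v # P2)" and pQ: "is_path E (Q1 @ v # Q2)" using P'(1) Q'(1) d by auto
  have "v \<notin> K"
  proof
    assume "v \<in> K"
    then have "P2 = []" "Q2 = []" using path_inner_not_sink pP pQ by blast+
    then show False using P'(3) Q'(3) d sinks_x_less[OF idx(3,4) \<open>b < b'\<close>] by simp
  qed
  then have P2: "P2 \<noteq> []" and Q2: "Q2 \<noteq> []" using P'(3,5) Q'(3,5) d by auto
  have "\<not> HE v (hd P2)"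
  proof (rule leaving_edge_not_H)
    show "is_path E (v # P2)" using pP by (rule is_path_appendD2)
    show "set P2 \<subseteq> V" using P'(6) d by auto
    show "pos (last P2) \<le> pos (last Q)"
      using P'(3) Q'(3) d P2 sinks_same_y[OF idx(3,4)] sinks_x_less[OF idx(3,4) \<open>b < b'\<close>]
      by (simp add: less_eq_prod_def)
  qed (use P2 Q'(1,4,5) d in auto)
  moreover have "(v, hd P2) \<in> E" by (rule is_path_first_edge[OF is_path_appendD2[OF pP] P2])
  ultimately have "v \<notin> S" using source_edge_H by blast
  then have "Q1 \<noteq> []" "hd Q1 \<in> S" using Q'(4) d by (cases Q1; simp)+
  moreover have "last P2 \<in> K" "last Q2 \<in> K" using P'(5) Q'(5) d P2 Q2 by simp_all
  ultimately show ?thesis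
    using wt_exchange_tails[OF pP pQ _ _ P2 Q2 _ _ _ \<open>\<not> HE v (hd P2)\<close>] d by simp
qed

lemma wt_swap_at_first_meet:
  assumes P: "P \<in> paths (r a) (c b)" and Q: "Q \<in> paths (r a') (c b')"
    and idx: "a \<in> {1..m}" "a' \<in> {1..m}" "b \<in> {1..n}" "b' \<in> {1..n}" and "a < a'"
    and meet: "set P \<inter> set Q \<noteq> {}"
  shows "wt Q * wt P =
    \<phi> (inverse q) * (wt (fst (swap_at_first_meet P Q)) * wt (snd (swap_at_first_meet P Q)))"
proof -
  note P' = full_paths[OF P idx(1,3)] and Q' = full_paths[OF Q idx(2,4)]
  obtain P1 v P2 Q1 Q2 where d: "P = P1 @ v # P2" "Q = Q1 @ v # Q2" "set P1 \<inter> set Q = {}"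
      "swap_at_first_meet P Q = (P1 @ v # Q2, Q1 @ v # P2)"
    by (rule swap_at_first_meet_split[OF P'(7) meet])
  have pP: "is_path E (P1 @ v # P2)" and pQ: "is_path E (Q1 @ v # Q2)" using P'(1) Q'(1) d by auto
  have "v \<notin> S"
  proof
    assume "v \<in> S"
    then have "P1 = []" "Q1 = []" using path_inner_not_source pP pQ by blast+
    then show False using P'(2) Q'(2) d sources_y_less[OF idx(1,2) \<open>a < a'\<close>] by simp
  qed
  then have P1: "P1 \<noteq> []" and Q1: "Q1 \<noteq> []" using P'(2,4) Q'(2,4) d by auto
  have pP1: "is_path E (P1 @ [v])" using pP by (rule is_path_appendD1)
  have pQ1: "is_path E (Q1 @ [v])" using pQ by (rule is_path_appendD1)
  have "\<not> VE (last P1) v"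
  proof (rule entering_edge_not_V[OF pP1 P1])
    show "set P1 \<subseteq> V" using P'(6) d by auto
    show "pos (hd P1) \<le> pos (hd Q)"
      using P'(2) Q'(2) d P1 sources_same_x[OF idx(1,2)] sources_y_less[OF idx(1,2) \<open>a < a'\<close>]
      by (simp add: less_eq_prod_def)
  qed (use Q'(1,4,5) d in auto)
  moreover have in_P: "(last P1, v) \<in> E" by (rule is_path_last_edge[OF pP1 P1])
  moreover have in_Q: "(last Q1, v) \<in> E" by (rule is_path_last_edge[OF pQ1 Q1])
  ultimately have H: "HE (last P1) v" using edge_H_or_V by blast
  have "last P1 \<noteq> last Q1" using d(2,3) last_in_set[OF P1] last_in_set[OF Q1] by auto
  then have "\<not> HE (last Q1) v" using H_in_unique[OF in_P in_Q H] by blast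
  have "v \<notin> K" using H sink_edge_V[OF in_P] not_H_and_V by blast
  then have Q2: "Q2 \<noteq> []" using Q'(5) d by auto
  have "hd P1 \<in> S" "hd Q1 \<in> S" "last Q2 \<in> K" using P'(4) Q'(4,5) d P1 Q1 Q2 by simp_all
  then show ?thesis
    using wt_exchange_heads[OF pP pQ P1 Q1 _ _ Q2 _ _ \<open>\<not> HE (last Q1) v\<close>] d by simp
qed

lemma wt_commute_disjoint:
  assumes P: "P \<in> paths (r a) (c b)" and Q: "Q \<in> paths (r a') (c b')"
    and idx: "a \<in> {1..m}" "a' \<in> {1..m}" "b \<in> {1..n}" "b' \<in> {1..n}"
    and disj: "set P \<inter> set Q = {}"
  shows "wt P * wt Q = wt Q * wt P"
proof -
  note P' = full_paths[OF P idx(1,3)] and Q' = full_paths[OF Q idx(2,4)]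
  have "path_qexp P Q = 0" by (rule path_qexp_disjoint[OF P'(1) Q'(1) P'(4) Q'(4) P'(5) Q'(5) disj])
  then show ?thesis using wt_q_commute[OF P'(1) Q'(1)] by simp
qed

section \<open>The relations between the entries of the path matrix\<close>

definition entry :: "nat \<Rightarrow> nat \<Rightarrow> 'a" where
  "entry a b = (\<Sum>P\<in>paths (r a) (c b). wt P)"

lemma entry_times_entry:
  "entry a b * entry a' b' = (\<Sum>(P, Q)\<in>paths (r a) (c b) \<times> paths (r a') (c b'). wt P * wt Q)"
  unfolding entry_def by (simp add: sum_mult_sum_Times case_prod_beta)

lemma entry_times_entry_swap:
  "entry a' b' * entry a b = (\<Sum>(P, Q)\<in>paths (r a) (c b) \<times> paths (r a') (c b'). wt Q * wt P)"
  unfolding entry_def by (simp add: sum_mult_sum_Times_swap case_prod_beta)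

lemma sum_meeting_pairs_swap_last:
  assumes idx: "a \<in> {1..m}" "a' \<in> {1..m}" "b \<in> {1..n}" "b' \<in> {1..n}" and "b < b'"
  shows "(\<Sum>(P, Q)\<in>meeting_pairs a b a' b'. wt P * wt Q)
       = \<phi> q * (\<Sum>(P, Q)\<in>meeting_pairs a b' a' b. wt P * wt Q)"
proof -
  let ?sw = "case_prod swap_at_last_meet" and ?w = "\<lambda>(P, Q). wt P * wt Q"
  have "(\<Sum>(P, Q)\<in>meeting_pairs a b a' b'. wt P * wt Q) = (\<Sum>t\<in>meeting_pairs a b a' b'. \<phi> q * ?w (?sw t))"
    using wt_swap_at_last_meet[OF _ _ idx \<open>b < b'\<close>]
    by (intro sum.cong) (auto simp: meeting_pairs_def split_beta)
  also have "\<dots> = \<phi> q * (\<Sum>t\<in>meeting_pairs a b a' b'. ?w (?sw t))" by (simp add: sum_distrib_left)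
  also have "(\<Sum>t\<in>meeting_pairs a b a' b'. ?w (?sw t)) = (\<Sum>t\<in>meeting_pairs a b' a' b. ?w t)"
    by (rule sum.reindex_bij_witness[of _ ?sw ?sw]) (auto dest: swap_at_last_meet_meeting_pairs)
  finally show ?thesis .
qed

lemma sum_meeting_pairs_swap_first:
  assumes idx: "a \<in> {1..m}" "a' \<in> {1..m}" "b \<in> {1..n}" "b' \<in> {1..n}" and "a < a'"
  shows "(\<Sum>(P, Q)\<in>meeting_pairs a b a' b'. wt Q * wt P)
       = \<phi> (inverse q) * (\<Sum>(P, Q)\<in>meeting_pairs a b' a' b. wt P * wt Q)"
proof -
  let ?sw = "case_prod swap_at_first_meet" and ?w = "\<lambda>(P, Q). wt P * wt Q"
  have "(\<Sum>(P, Q)\<in>meeting_pairs a b a' b'. wt Q * wt P)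
      = (\<Sum>t\<in>meeting_pairs a b a' b'. \<phi> (inverse q) * ?w (?sw t))"
    using wt_swap_at_first_meet[OF _ _ idx \<open>a < a'\<close>]
    by (intro sum.cong) (auto simp: meeting_pairs_def split_beta)
  also have "\<dots> = \<phi> (inverse q) * (\<Sum>t\<in>meeting_pairs a b a' b'. ?w (?sw t))"
    by (simp add: sum_distrib_left)
  also have "(\<Sum>t\<in>meeting_pairs a b a' b'. ?w (?sw t)) = (\<Sum>t\<in>meeting_pairs a b' a' b. ?w t)"
    by (rule sum.reindex_bij_witness[of _ ?sw ?sw]) (auto dest: swap_at_first_meet_meeting_pairs)
  finally show ?thesis .
qed

lemma entries_same_row:
  assumes i: "i \<in> {1..m}" and jk: "j \<in> {1..n}" "k \<in> {1..n}" "j < k"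
  shows "entry i j * entry i k = \<phi> q * (entry i k * entry i j)"
proof -
  have meet: "meeting_pairs i b i b' = paths (r i) (c b) \<times> paths (r i) (c b')"
    if "b \<in> {1..n}" "b' \<in> {1..n}" for b b'
    using full_paths[OF _ i that(1)] full_paths[OF _ i that(2)]
    by (intro meeting_pairs_eq_Times) (metis disjoint_iff hd_in_set)
  have "entry i j * entry i k = (\<Sum>(P, Q)\<in>meeting_pairs i j i k. wt P * wt Q)"
    by (simp only: entry_times_entry meet[OF jk(1,2)])
  also have "\<dots> = \<phi> q * (\<Sum>(P, Q)\<in>meeting_pairs i k i j. wt P * wt Q)"
    by (rule sum_meeting_pairs_swap_last[OF i i jk])
  also have "(\<Sum>(P, Q)\<in>meeting_pairs i k i j. wt P * wt Q) = entry i k * entry i j"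
    by (simp only: entry_times_entry meet[OF jk(2,1)])
  finally show ?thesis .
qed

lemma entries_same_column:
  assumes il: "i \<in> {1..m}" "l \<in> {1..m}" "i < l" and j: "j \<in> {1..n}"
  shows "entry i j * entry l j = \<phi> q * (entry l j * entry i j)"
proof -
  have meet: "meeting_pairs i j l j = paths (r i) (c j) \<times> paths (r l) (c j)"
    using full_paths[OF _ il(1) j] full_paths[OF _ il(2) j]
    by (intro meeting_pairs_eq_Times) (metis disjoint_iff last_in_set)
  have "entry l j * entry i j = (\<Sum>(P, Q)\<in>meeting_pairs i j l j. wt Q * wt P)"
    by (simp add: entry_times_entry_swap meet)
  also have "\<dots> = \<phi> (inverse q) * (entry i j * entry l j)"
    using sum_meeting_pairs_swap_first[OF il(1,2) j j il(3)] by (simp add: entry_times_entry meet)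
  finally have "\<phi> q * (entry l j * entry i j) = (\<phi> q * \<phi> (inverse q)) * (entry i j * entry l j)"
    by (simp add: mult.assoc)
  then show ?thesis by (simp add: phi_q_inverse)
qed

text \<open>Both products are sums over meeting pairs, since every path from \<open>r i\<close> to \<open>c k\<close> meets
  every path from \<open>r l\<close> to \<open>c j\<close>; the two exchanges turn both into the same multiple of the
  sum over the meeting pairs from \<open>r i, r l\<close> to \<open>c j, c k\<close>.\<close>

lemma entries_crossing_commute:
  assumes idx: "i \<in> {1..m}" "l \<in> {1..m}" "i < l" "j \<in> {1..n}" "k \<in> {1..n}" "j < k"
  shows "entry i k * entry l j = entry l j * entry i k"
proof -
  have meet: "meeting_pairs i k l j = paths (r i) (c k) \<times> paths (r l) (c j)"
    using crossing_paths_meet[OF _ _ idx(1,2,4,5,3,6)] by (intro meeting_pairs_eq_Times)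
  have "\<phi> q * (entry i k * entry l j) = (\<Sum>(P, Q)\<in>meeting_pairs i j l k. wt P * wt Q)"
    using sum_meeting_pairs_swap_last[OF idx(1,2,4,5,6)] by (simp add: entry_times_entry meet)
  moreover have "entry l j * entry i k = \<phi> (inverse q) * (\<Sum>(P, Q)\<in>meeting_pairs i j l k. wt P * wt Q)"
    using sum_meeting_pairs_swap_first[OF idx(1,2,5,4,3)] by (simp add: entry_times_entry_swap meet)
  ultimately have "entry l j * entry i k = (\<phi> (inverse q) * \<phi> q) * (entry i k * entry l j)"
    by (simp add: mult.assoc)
  then show ?thesis by (simp add: phi_q_inverse)
qed

lemma entries_commutator:
  assumes idx: "i \<in> {1..m}" "l \<in> {1..m}" "i < l" "j \<in> {1..n}" "k \<in> {1..n}" "j < k"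
  shows "entry i j * entry l k - entry l k * entry i j
       = (\<phi> q - \<phi> (inverse q)) * (entry i k * entry l j)"
proof -
  let ?Y = "paths (r i) (c j) \<times> paths (r l) (c k)"
  have "entry i j * entry l k - entry l k * entry i j = (\<Sum>(P, Q)\<in>?Y. wt P * wt Q - wt Q * wt P)"
    unfolding entry_times_entry[of i j l k] entry_times_entry_swap[where a = i and b = j and a' = l and b' = k]
    by (simp add: sum_subtractf case_prod_beta)
  also have "\<dots> = (\<Sum>(P, Q)\<in>meeting_pairs i j l k. wt P * wt Q - wt Q * wt P)"
  proof (rule sum.mono_neutral_right)
    show "finite ?Y" using finite_paths by simp
    show "meeting_pairs i j l k \<subseteq> ?Y" by (auto simp: meeting_pairs_def)
    show "\<forall>t\<in>?Y - meeting_pairs i j l k. (\<lambda>(P, Q). wt P * wt Q - wt Q * wt P) t = 0"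
    proof
      fix t assume "t \<in> ?Y - meeting_pairs i j l k"
      then obtain P Q where "t = (P, Q)" "P \<in> paths (r i) (c j)" "Q \<in> paths (r l) (c k)"
        "set P \<inter> set Q = {}"
        by (auto simp: meeting_pairs_def)
      then show "(\<lambda>(P, Q). wt P * wt Q - wt Q * wt P) t = 0"
        using wt_commute_disjoint[OF _ _ idx(1,2,4,5)] by simp
    qed
  qed
  also have "\<dots> = \<phi> q * (\<Sum>(P, Q)\<in>meeting_pairs i k l j. wt P * wt Q)
      - \<phi> (inverse q) * (\<Sum>(P, Q)\<in>meeting_pairs i k l j. wt P * wt Q)"
    using sum_meeting_pairs_swap_last[OF idx(1,2,4,5,6)] sum_meeting_pairs_swap_first[OF idx(1,2,4,5,3)]
    by (simp add: sum_subtractf case_prod_beta)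
  also have "(\<Sum>(P, Q)\<in>meeting_pairs i k l j. wt P * wt Q) = entry i k * entry l j"
    using crossing_paths_meet[OF _ _ idx(1,2,4,5,3,6)]
    by (simp add: entry_times_entry meeting_pairs_eq_Times)
  finally show ?thesis by (simp add: left_diff_distrib)
qed

end

theorem theorem3p2:
  fixes V :: "'v set" and E :: "('v \<times> 'v) set" and pos :: "'v \<Rightarrow> real \<times> real"
    and m n :: nat and r c :: "nat \<Rightarrow> 'v"
    and \<phi> :: "'k::field \<Rightarrow> 'a::ring_1" and q :: 'k and x xi :: "'v \<Rightarrow> 'a"
    and i l j k :: nat
  assumes G: "SE_graph V E pos m r n c"
    and alg: "K_algebra_map \<phi>"
    and q: "q \<noteq> 0"
    and units: "\<forall>w\<in>inner_vertices V m r n c. x w * xi w = 1 \<and> xi w * x w = 1"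
    and rels: "LG_relations V E pos m r n c (\<phi> q) x"
    and idx: "1 \<le> i" "i < l" "l \<le> m" "1 \<le> j" "j < k" "k \<le> n"
  shows "let p = (\<lambda>a b. path_entry E (edge_wt pos (sources m r) x xi) (r a) (c b)) in
           p i j * p i k = \<phi> q * (p i k * p i j) \<and>
           p i j * p l j = \<phi> q * (p l j * p i j) \<and>
           p i k * p l j = p l j * p i k \<and>
           p i j * p l k - p l k * p i j = (\<phi> q - \<phi> (inverse q)) * (p i k * p l j)"
proof -
  interpret se_graph_algebra V E pos m r n c \<phi> q x xi
    by unfold_locales (fact G alg q units rels)+
  have entry_eq: "path_entry E (edge_wt pos (sources m r) x xi) (r a) (c b) = entry a b" for a b
    by (simp add: path_entry_def entry_def paths_def)
  have "i \<in> {1..m}" "l \<in> {1..m}" "j \<in> {1..n}" "k \<in> {1..n}" using idx by auto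
  note idx' = this idx(2,5)
  have "entry i j * entry i k = \<phi> q * (entry i k * entry i j)"
    by (rule entries_same_row[OF idx'(1,3,4,6)])
  moreover have "entry i j * entry l j = \<phi> q * (entry l j * entry i j)"
    by (rule entries_same_column[OF idx'(1,2,5,3)])
  moreover have "entry i k * entry l j = entry l j * entry i k"
    by (rule entries_crossing_commute[OF idx'(1,2,5,3,4,6)])
  moreover have "entry i j * entry l k - entry l k * entry i j
      = (\<phi> q - \<phi> (inverse q)) * (entry i k * entry l j)"
    by (rule entries_commutator[OF idx'(1,2,5,3,4,6)])
  ultimately show ?thesis unfolding Let_def entry_eq by blast
qed

end
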